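(* Let $C,D\subseteq\mathbb{R}^n$, $F,G:\mathbb{R}^n\rightrightarrows\mathbb{R}^n$ define the hybrid system $\dot x\in F(x)$, $x\in C$; $x^+\in G(x)$, $x\in D$, satisfying the hybrid basic conditions (A1)–(A3) below, and let $\phi^\star$ be a $t$-complete solution of this system. Assume: (i) $G(D)\cap D=\emptyset$, $G(D)\subseteq C$, and $G$ is single-valued and proper; (ii) for all $x\in C\cap D$, $F(x)\cap T_C(x)=\emptyset$; (iii) for all $x\in C\cap G(D)$, $-F(x)\cap T_C(x)=\emptyset$; (iv) either $D$ is bounded or $\phi^\star$ is bounded. Then for every $\varepsilon>0$ there exists $s>0$ such that for any $t$-complete solution $\phi$ of the system satisfying (v) $\|\phi^\star(0,0)-\phi(0,0)\|<s$, and (vi) for all $(t,j)\in\operatorname{dom}\phi^\star$ there exists $(t,\tilde\jmath)\in\operatorname{dom}\phi$ with $\rho_{\mathcal A}(\phi^\star(t,j),\phi(t,\tilde\jmath))<s$, it holds that for every $(t,j)\in\operatorname{dom}\phi^\star$ there exists $(t',j')\in\operatorname{dom}\phi$ with $|t-t'|<\varepsilon$ and $\|\phi^\star(t,j)-\phi(t',j')\|<\varepsilon$.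
   Context: $\|\cdot\|$ is the Euclidean norm, $\mathcal B_s=\{x:\|x\|\le s\}$, $S_1+S_2=\{y_1+y_2:y_1\in S_1,y_2\in S_2\}$, $\operatorname{dom}F=\{x:F(x)\neq\emptyset\}$. Hybrid basic conditions: (A1) $C$ and $D$ are closed; (A2) $F$ is outer semicontinuous and locally bounded relative to $C$, $C\subseteq\operatorname{dom}F$, and $F(x)$ is convex for each $x\in C$; (A3) $G$ is outer semicontinuous and locally bounded relative to $D$, and $D\subseteq\operatorname{dom}G$. A hybrid time domain is a set $E\subseteq\mathbb{R}_{\ge0}\times\mathbb{N}$ such that for each $(T,J)\in E$, $E\cap([0,T]\times\{0,\dots,J\})=\bigcup_{j=0}^{J}[t_j,t_{j+1}]\times\{j\}$ for some $0=t_0\le t_1\le\dots\le t_{J+1}$. A solution is a function $\phi$ on a hybrid time domain with $t\mapsto\phi(t,j)$ locally absolutely continuous on each $I^j=\{t:(t,j)\in\operatorname{dom}\phi\}$, $\phi(0,0)\in C\cup D$, such that for each $j$ with $I^j$ of nonempty interior, $\phi(t,j)\in C$ for all $t\in\operatorname{int}I^j$ and $\frac{d}{dt}\phi(t,j)\in F(\phi(t,j))$ for almost all $t\in I^j$, and whenever $(t,j),(t,j+1)\in\operatorname{dom}\phi$, $\phi(t,j)\in D$ and $\phi(t,j+1)\in G(\phi(t,j))$. A solution is $t$-complete if $\sup_{(t,j)\in\operatorname{dom}\phi}t=\infty$, and bounded if $\|\phi(t,j)\|\le R$ on its domain for some $R>0$. $T_C(x)$ is the (Bouligand) tangent cone: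 the set of $w$ for which there exist $\tau_i\downarrow0$ and $w_i\to w$ with $x+\tau_iw_i\in C$. $G$ proper means preimages of compact sets are compact. $\mathcal A=\{(x_1,x_2)\in(C\cup D\cup G(D))^2: x_1=x_2,\ \text{or } (x_2\in D \text{ and } x_1\in G(x_2)),\ \text{or } (x_1\in D\text{ and } x_2\in G(x_1))\}$ and $\rho_{\mathcal A}(x,y)=\inf_{(u,v)\in\mathcal A}\|(x-u,y-v)\|$, where $(a,b)$ denotes the stacked vector. *)

theory Defs
  imports "HOL-Analysis.Analysis"
begin

text \<open>Set-valued maps are functions \<open>'a \<Rightarrow> 'a set\<close>; vectors live in an arbitrary
  Euclidean space \<open>'a\<close> (i.e. \<open>\<real>^n\<close>).\<close>

definition osc_rel :: "('a::real_normed_vector \<Rightarrow> 'b::real_normed_vector set) \<Rightarrow> 'a set \<Rightarrow> bool" where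
  "osc_rel F S \<longleftrightarrow> (\<forall>x\<in>S. \<forall>xs ys y. (\<forall>i. xs i \<in> S \<and> ys i \<in> F (xs i)) \<and>
       xs \<longlonglongrightarrow> x \<and> ys \<longlonglongrightarrow> y \<longrightarrow> y \<in> F x)"

definition locally_bounded_rel :: "('a::real_normed_vector \<Rightarrow> 'b::real_normed_vector set) \<Rightarrow> 'a set \<Rightarrow> bool" where
  "locally_bounded_rel F S \<longleftrightarrow> (\<forall>x\<in>S. \<exists>e>0. bounded (\<Union>y\<in>S \<inter> ball x e. F y))"

definition hybrid_basic_conditions ::
  "'a::euclidean_space set \<Rightarrow> ('a \<Rightarrow> 'a set) \<Rightarrow> 'a set \<Rightarrow> ('a \<Rightarrow> 'a set) \<Rightarrow> bool" where
  "hybrid_basic_conditions C F D G \<longleftrightarrow>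
     closed C \<and> closed D \<and>
     osc_rel F C \<and> locally_bounded_rel F C \<and> (\<forall>x\<in>C. F x \<noteq> {} \<and> convex (F x)) \<and>
     osc_rel G D \<and> locally_bounded_rel G D \<and> (\<forall>x\<in>D. G x \<noteq> {})"

definition hybrid_time_domain :: "(real \<times> nat) set \<Rightarrow> bool" where
  "hybrid_time_domain E \<longleftrightarrow> E \<subseteq> {0..} \<times> UNIV \<and>
     (\<forall>(T,J)\<in>E. \<exists>tt :: nat \<Rightarrow> real. tt 0 = 0 \<and> (\<forall>j\<le>J. tt j \<le> tt (Suc j)) \<and>
        E \<inter> ({0..T} \<times> {0..J}) = (\<Union>j\<in>{0..J}. {tt j..tt (Suc j)} \<times> {j}))"

definition abs_continuous_on_interval :: "real \<Rightarrow> real \<Rightarrow> (real \<Rightarrow> 'a::real_normed_vector) \<Rightarrow> bool" where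
  "abs_continuous_on_interval a b f \<longleftrightarrow>
     (\<forall>e>0. \<exists>d>0. \<forall>(n::nat) (l::nat \<Rightarrow> real) (r::nat \<Rightarrow> real).
        (\<forall>k<n. a \<le> l k \<and> l k \<le> r k \<and> r k \<le> b) \<and>
        (\<forall>k<n. \<forall>k'<n. k \<noteq> k' \<longrightarrow> r k \<le> l k' \<or> r k' \<le> l k) \<and>
        (\<Sum>k<n. r k - l k) < d \<longrightarrow> (\<Sum>k<n. norm (f (r k) - f (l k))) < e)"

definition locally_abs_continuous_on :: "real set \<Rightarrow> (real \<Rightarrow> 'a::real_normed_vector) \<Rightarrow> bool" where
  "locally_abs_continuous_on I f \<longleftrightarrow> (\<forall>a b. {a..b} \<subseteq> I \<longrightarrow> abs_continuous_on_interval a b f)"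

definition Ij :: "(real \<times> nat) set \<Rightarrow> nat \<Rightarrow> real set" where
  "Ij E j = {t. (t, j) \<in> E}"

text \<open>A solution is a pair (domain \<open>E\<close>, function \<open>\<phi>\<close>); values of \<open>\<phi>\<close> off \<open>E\<close> are irrelevant.\<close>
definition is_solution ::
  "'a::euclidean_space set \<Rightarrow> ('a \<Rightarrow> 'a set) \<Rightarrow> 'a set \<Rightarrow> ('a \<Rightarrow> 'a set) \<Rightarrow>
   (real \<times> nat) set \<Rightarrow> (real \<times> nat \<Rightarrow> 'a) \<Rightarrow> bool" where
  "is_solution C F D G E \<phi> \<longleftrightarrow>
     hybrid_time_domain E \<and> (0, 0) \<in> E \<and> \<phi> (0, 0) \<in> C \<union> D \<and>
     (\<forall>j. locally_abs_continuous_on (Ij E j) (\<lambda>t. \<phi> (t, j))) \<and>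
     (\<forall>j. interior (Ij E j) \<noteq> {} \<longrightarrow>
        (\<forall>t\<in>interior (Ij E j). \<phi> (t, j) \<in> C) \<and>
        (\<exists>N. negligible N \<and> (\<forall>t\<in>Ij E j - N. \<exists>v.
            ((\<lambda>s. \<phi> (s, j)) has_vector_derivative v) (at t within Ij E j) \<and> v \<in> F (\<phi> (t, j))))) \<and>
     (\<forall>t j. (t, j) \<in> E \<and> (t, Suc j) \<in> E \<longrightarrow> \<phi> (t, j) \<in> D \<and> \<phi> (t, Suc j) \<in> G (\<phi> (t, j)))"

definition t_complete :: "(real \<times> nat) set \<Rightarrow> bool" where
  "t_complete E \<longleftrightarrow> (\<forall>T. \<exists>(t, j)\<in>E. t > T)"

definition bounded_solution :: "(real \<times> nat) set \<Rightarrow> (real \<times> nat \<Rightarrow> 'a::real_normed_vector) \<Rightarrow> bool" where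
  "bounded_solution E \<phi> \<longleftrightarrow> (\<exists>R>0. \<forall>p\<in>E. norm (\<phi> p) \<le> R)"

definition tangent_cone :: "'a::real_normed_vector set \<Rightarrow> 'a \<Rightarrow> 'a set" where
  "tangent_cone C x = {w. \<exists>\<tau> ws. (\<forall>i. \<tau> i > 0 \<and> x + \<tau> i *\<^sub>R ws i \<in> C) \<and>
       decseq \<tau> \<and> \<tau> \<longlonglongrightarrow> 0 \<and> ws \<longlonglongrightarrow> w}"

definition single_valued_on :: "('a \<Rightarrow> 'b set) \<Rightarrow> 'a set \<Rightarrow> bool" where
  "single_valued_on G D \<longleftrightarrow> (\<forall>x\<in>D. \<exists>y. G x = {y})"

definition proper_map :: "('a::topological_space \<Rightarrow> 'b::topological_space set) \<Rightarrow> bool" where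
  "proper_map G \<longleftrightarrow> (\<forall>K. compact K \<longrightarrow> compact {x. G x \<inter> K \<noteq> {}})"

definition set_image :: "('a \<Rightarrow> 'b set) \<Rightarrow> 'a set \<Rightarrow> 'b set" where
  "set_image G D = (\<Union>x\<in>D. G x)"

definition setA :: "'a set \<Rightarrow> 'a set \<Rightarrow> ('a \<Rightarrow> 'a set) \<Rightarrow> ('a \<times> 'a) set" where
  "setA C D G = {(x1, x2). x1 \<in> C \<union> D \<union> set_image G D \<and> x2 \<in> C \<union> D \<union> set_image G D \<and>
      (x1 = x2 \<or> (x2 \<in> D \<and> x1 \<in> G x2) \<or> (x1 \<in> D \<and> x2 \<in> G x1))}"

text \<open>Distance to \<open>\<A>\<close>; the norm on \<open>'a \<times> 'a\<close> is the Euclidean norm of the stacked vector.\<close>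
definition rhoA :: "'a::euclidean_space set \<Rightarrow> 'a set \<Rightarrow> ('a \<Rightarrow> 'a set) \<Rightarrow> 'a \<Rightarrow> 'a \<Rightarrow> real" where
  "rhoA C D G x y = (INF p\<in>setA C D G. norm ((x, y) - p))"

end

theory Submission
  imports Defs
begin

text \<open>Write \<open>g\<close> for the single-valued jump map.  Transversality forbids flowing out of \<open>D\<close> and
  flowing backwards out of \<open>g(D)\<close>; a compactness argument on difference quotients makes this
  quantitative: a flow arc of length \<open>\<tau>\<close> can neither start near a compact part of \<open>D\<close> nor end near
  its image under \<open>g\<close>.  As \<open>G\<close> is proper and \<open>g(D)\<close> misses \<open>D\<close>, compact parts of \<open>D\<close> stay away
  from the jump targets, so near \<open>D\<close> the distance \<open>\<rho>\<^sub>\<A>\<close> bounds the ordinary distance.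

  If \<open>\<phi>\<^sup>\<star>(t, j)\<close> is \<open>\<rho>\<^sub>\<A>\<close>-close to \<open>\<phi>(t, j')\<close>, either the two points are close, or \<open>\<phi>\<close> is near
  some \<open>v \<in> D\<close> while \<open>\<phi>\<^sup>\<star>\<close> is near \<open>g v\<close>, and then \<open>\<phi>\<close> jumps within a short time to a point
  near \<open>g v\<close> by continuity of \<open>g\<close>; or \<open>\<phi>\<^sup>\<star>\<close> is near some \<open>u \<in> D\<close> while \<open>\<phi>\<close> is near \<open>g u\<close>, and then
  \<open>\<phi>\<close> has just jumped, \<open>\<phi>\<^sup>\<star>\<close> has not, and shortly before that jump both solutions are near \<open>D\<close>.\<close>

section \<open>Absolute continuity\<close>

definition nonoverlapping_subintervals :: "real \<Rightarrow> real \<Rightarrow> nat \<Rightarrow> (nat \<Rightarrow> real) \<Rightarrow> (nat \<Rightarrow> real) \<Rightarrow> bool" where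
  "nonoverlapping_subintervals a b n l r \<longleftrightarrow>
     (\<forall>k<n. a \<le> l k \<and> l k \<le> r k \<and> r k \<le> b) \<and> (\<forall>k<n. \<forall>k'<n. k \<noteq> k' \<longrightarrow> r k \<le> l k' \<or> r k' \<le> l k)"

lemma abs_continuous_on_interval_iff:
  "abs_continuous_on_interval a b f \<longleftrightarrow>
     (\<forall>e>0. \<exists>d>0. \<forall>n l r. nonoverlapping_subintervals a b n l r \<and> (\<Sum>k<n. r k - l k) < d \<longrightarrow>
        (\<Sum>k<n. norm (f (r k) - f (l k))) < e)"
  unfolding abs_continuous_on_interval_def nonoverlapping_subintervals_def by (simp add: conj_assoc)

lemma abs_continuous_on_intervalE:
  assumes "abs_continuous_on_interval a b f" "e > 0"
  obtains d where "d > 0"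
    "\<And>n l r. nonoverlapping_subintervals a b n l r \<Longrightarrow> (\<Sum>k<n. r k - l k) < d \<Longrightarrow>
       (\<Sum>k<n. norm (f (r k) - f (l k))) < e"
proof -
  from assms(1)[unfolded abs_continuous_on_interval_iff imp_conjL, rule_format, OF assms(2)]
  obtain d where "d > 0" and "\<forall>n l r. nonoverlapping_subintervals a b n l r \<longrightarrow> (\<Sum>k<n. r k - l k) < d \<longrightarrow>
      (\<Sum>k<n. norm (f (r k) - f (l k))) < e"
    by (elim exE conjE)
  then show ?thesis by (intro that) blast+
qed

lemma abs_continuous_on_intervalI:
  assumes "\<And>e. e > 0 \<Longrightarrow> \<exists>d>0. \<forall>n l r. nonoverlapping_subintervals a b n l r \<longrightarrow> (\<Sum>k<n. r k - l k) < d \<longrightarrow>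
       (\<Sum>k<n. norm (f (r k) - f (l k))) < e"
  shows "abs_continuous_on_interval a b f"
  unfolding abs_continuous_on_interval_iff imp_conjL by (intro allI impI assms)

lemma abs_continuous_on_interval_imp_continuous_on:
  assumes "abs_continuous_on_interval a b f"
  shows "continuous_on {a..b} f"
  unfolding continuous_on_iff
proof (intro ballI allI impI)
  fix x e :: real assume x: "x \<in> {a..b}" and e: "e > 0"
  obtain d where d: "d > 0" and small: "\<And>n l r. nonoverlapping_subintervals a b n l r \<Longrightarrow>
      (\<Sum>k<n. r k - l k) < d \<Longrightarrow> (\<Sum>k<n. norm (f (r k) - f (l k))) < e"
    using abs_continuous_on_intervalE[OF assms e] by blast
  have "dist (f y) (f x) < e" if y: "y \<in> {a..b}" "dist y x < d" for y
  proof -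
    have "(\<Sum>k<Suc 0. norm (f (max x y) - f (min x y))) < e"
      using small[of "Suc 0" "\<lambda>_. min x y" "\<lambda>_. max x y"] x y
      by (auto simp: nonoverlapping_subintervals_def dist_real_def)
    then show ?thesis
      by (cases "x \<le> y") (simp_all add: dist_norm norm_minus_commute max_def min_def)
  qed
  with d show "\<exists>d>0. \<forall>y\<in>{a..b}. dist y x < d \<longrightarrow> dist (f y) (f x) < e" by blast
qed

lemma abs_continuous_on_interval_subset:
  assumes "abs_continuous_on_interval a b f" "a \<le> a'" "b' \<le> b"
  shows "abs_continuous_on_interval a' b' f"
proof (rule abs_continuous_on_intervalI)
  fix e :: real assume e: "e > 0"
  obtain d where "d > 0" and small: "\<And>n l r. nonoverlapping_subintervals a b n l r \<Longrightarrow>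
      (\<Sum>k<n. r k - l k) < d \<Longrightarrow> (\<Sum>k<n. norm (f (r k) - f (l k))) < e"
    using abs_continuous_on_intervalE[OF assms(1) e] by blast
  moreover have "nonoverlapping_subintervals a b n l r" if "nonoverlapping_subintervals a' b' n l r" for n l r
    using that assms(2,3) unfolding nonoverlapping_subintervals_def by force
  ultimately show "\<exists>d>0. \<forall>n l r. nonoverlapping_subintervals a' b' n l r \<longrightarrow>
      (\<Sum>k<n. r k - l k) < d \<longrightarrow> (\<Sum>k<n. norm (f (r k) - f (l k))) < e" by blast
qed

lemma abs_continuous_on_interval_reflect:
  assumes "abs_continuous_on_interval a b f"
  shows "abs_continuous_on_interval (- b) (- a) (\<lambda>t. f (- t))"
proof (rule abs_continuous_on_intervalI)
  fix e :: real assume e: "e > 0"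
  obtain d where d: "d > 0" and small: "\<And>n l r. nonoverlapping_subintervals a b n l r \<Longrightarrow>
      (\<Sum>k<n. r k - l k) < d \<Longrightarrow> (\<Sum>k<n. norm (f (r k) - f (l k))) < e"
    using abs_continuous_on_intervalE[OF assms e] by blast
  have "(\<Sum>k<n. norm (f (- r k) - f (- l k))) < e"
    if "nonoverlapping_subintervals (- b) (- a) n l r" "(\<Sum>k<n. r k - l k) < d" for n l r
  proof -
    have "nonoverlapping_subintervals a b n (\<lambda>k. - r k) (\<lambda>k. - l k)"
      using that(1) unfolding nonoverlapping_subintervals_def by force
    moreover have "(\<Sum>k<n. - l k - - r k) < d" using that(2) by (simp add: algebra_simps)
    ultimately have "(\<Sum>k<n. norm (f (- l k) - f (- r k))) < e" by (rule small)
    then show ?thesis by (simp add: norm_minus_commute)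
  qed
  with d show "\<exists>d>0. \<forall>n l r. nonoverlapping_subintervals (- b) (- a) n l r \<longrightarrow>
      (\<Sum>k<n. r k - l k) < d \<longrightarrow> (\<Sum>k<n. norm (f (- r k) - f (- l k))) < e" by blast
qed

lemma abs_continuous_on_interval_dominated:
  fixes f :: "real \<Rightarrow> 'a::real_normed_vector" and g :: "real \<Rightarrow> 'b::real_normed_vector"
  assumes ac: "abs_continuous_on_interval a b f" and A: "A \<ge> 0" and B: "B \<ge> 0"
    and le: "\<And>l r. a \<le> l \<Longrightarrow> l \<le> r \<Longrightarrow> r \<le> b \<Longrightarrow> norm (g r - g l) \<le> A * norm (f r - f l) + B * (r - l)"
  shows "abs_continuous_on_interval a b g"
proof (rule abs_continuous_on_intervalI)
  fix e :: real assume e: "e > 0"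
  then obtain d1 where d1: "d1 > 0" and small: "\<And>n l r. nonoverlapping_subintervals a b n l r \<Longrightarrow>
      (\<Sum>k<n. r k - l k) < d1 \<Longrightarrow> (\<Sum>k<n. norm (f (r k) - f (l k))) < e / (2 * (A + 1))"
    using abs_continuous_on_intervalE[OF ac, of "e / (2 * (A + 1))"] A e by auto
  define d where "d = min d1 (e / (2 * (B + 1)))"
  have "(\<Sum>k<n. norm (g (r k) - g (l k))) < e"
    if lr: "nonoverlapping_subintervals a b n l r" and len: "(\<Sum>k<n. r k - l k) < d" for n l r
  proof -
    have "A * (\<Sum>k<n. norm (f (r k) - f (l k))) \<le> A * (e / (2 * (A + 1)))"
      using small[OF lr] len A by (intro mult_left_mono) (auto simp: d_def)
    also have "\<dots> < e / 2" using A e by (simp add: field_simps)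
    finally have 1: "A * (\<Sum>k<n. norm (f (r k) - f (l k))) < e / 2" .
    have "B * (\<Sum>k<n. r k - l k) \<le> B * (e / (2 * (B + 1)))"
      using len B by (intro mult_left_mono) (auto simp: d_def)
    also have "\<dots> < e / 2" using B e by (simp add: field_simps)
    finally have 2: "B * (\<Sum>k<n. r k - l k) < e / 2" .
    have "(\<Sum>k<n. norm (g (r k) - g (l k))) \<le> (\<Sum>k<n. A * norm (f (r k) - f (l k)) + B * (r k - l k))"
      using lr le by (intro sum_mono) (auto simp: nonoverlapping_subintervals_def)
    also have "\<dots> = A * (\<Sum>k<n. norm (f (r k) - f (l k))) + B * (\<Sum>k<n. r k - l k)"
      by (simp add: sum.distrib sum_distrib_left)
    finally show ?thesis using 1 2 by linarith
  qed
  moreover have "d > 0" using d1 e B by (simp add: d_def)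
  ultimately show "\<exists>d>0. \<forall>n l r. nonoverlapping_subintervals a b n l r \<longrightarrow>
      (\<Sum>k<n. r k - l k) < d \<longrightarrow> (\<Sum>k<n. norm (g (r k) - g (l k))) < e" by blast
qed

lemma measure_continuous_image_interval_le:
  fixes k :: "real \<Rightarrow> real"
  assumes k: "continuous_on {c..d} k" and cd: "c \<le> d"
  obtains l r where "c \<le> l" "l \<le> r" "r \<le> d" "measure lebesgue (k ` {c..d}) \<le> \<bar>k r - k l\<bar>"
proof -
  obtain p where p: "p \<in> {c..d}" "\<And>y. y \<in> {c..d} \<Longrightarrow> k y \<le> k p"
    using continuous_attains_sup[of "{c..d}" k] k cd by auto
  obtain q where q: "q \<in> {c..d}" "\<And>y. y \<in> {c..d} \<Longrightarrow> k q \<le> k y"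
    using continuous_attains_inf[of "{c..d}" k] k cd by auto
  have "k ` {c..d} \<subseteq> {k q..k p}" using p q by auto
  moreover have "k ` {c..d} \<in> sets lebesgue"
    using k by (intro fmeasurableD lmeasurable_compact compact_continuous_image) auto
  ultimately have "measure lebesgue (k ` {c..d}) \<le> measure lebesgue {k q..k p}"
    by (intro measure_mono_fmeasurable) auto
  also have "\<dots> = \<bar>k p - k q\<bar>" using p(2)[OF q(1)] by simp
  finally show ?thesis
    using p q that[of q p] that[of p q] by (cases "q \<le> p") (auto simp: abs_minus_commute)
qed

lemma interval_interiors_disjoint_cases:
  fixes c d c' d' :: real
  assumes "c < d" "c' < d'" "interior {c..d} \<inter> interior {c'..d'} = {}"
  shows "d \<le> c' \<or> d' \<le> c"
proof (rule ccontr)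
  assume "\<not> (d \<le> c' \<or> d' \<le> c)"
  then have "(max c c' + min d d') / 2 \<in> interior {c..d} \<inter> interior {c'..d'}"
    using assms by (auto simp: max_def min_def split: if_splits)
  then show False using assms by blast
qed

text \<open>The finite step of the Lusin (N) property of absolutely continuous functions.\<close>

lemma measure_image_nonoverlapping_intervals_le:
  fixes k :: "real \<Rightarrow> real"
  assumes k: "continuous_on {a..b} k"
    and small: "\<And>n l r. nonoverlapping_subintervals a b n l r \<Longrightarrow> (\<Sum>i<n. r i - l i) < \<delta> \<Longrightarrow>
       (\<Sum>i<n. norm (k (r i) - k (l i))) < e"
    and fin: "finite \<K>" and intervals: "\<And>K. K \<in> \<K> \<Longrightarrow> \<exists>c d. K = {c..d} \<and> c < d \<and> a \<le> c \<and> d \<le> b"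
    and disj: "pairwise (\<lambda>K K'. interior K \<inter> interior K' = {}) \<K>"
    and len: "measure lebesgue (\<Union>\<K>) < \<delta>"
  shows "measure lebesgue (\<Union>K\<in>\<K>. k ` K) \<le> e"
proof -
  have K: "{Inf K..Sup K} = K" "Inf K < Sup K" "a \<le> Inf K" "Sup K \<le> b" if "K \<in> \<K>" for K
    using intervals[OF that] by auto
  have Kmeas: "K \<in> lmeasurable" and Klen: "measure lebesgue K = Sup K - Inf K" if "K \<in> \<K>" for K
  proof -
    have "{Inf K..Sup K} \<in> lmeasurable" "measure lebesgue {Inf K..Sup K} = Sup K - Inf K"
      using K(2)[OF that] by auto
    then show "K \<in> lmeasurable" "measure lebesgue K = Sup K - Inf K" unfolding K(1)[OF that] .
  qed
  have "\<forall>K\<in>\<K>. \<exists>l r. Inf K \<le> l \<and> l \<le> r \<and> r \<le> Sup K \<and> measure lebesgue (k ` K) \<le> \<bar>k r - k l\<bar>"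
  proof
    fix K assume KK: "K \<in> \<K>"
    obtain c d where cd: "K = {c..d}" "c < d" "a \<le> c" "d \<le> b" using intervals[OF KK] by blast
    have "continuous_on {c..d} k" using cd by (intro continuous_on_subset[OF k]) auto
    then obtain l r where "c \<le> l" "l \<le> r" "r \<le> d" "measure lebesgue (k ` {c..d}) \<le> \<bar>k r - k l\<bar>"
      using measure_continuous_image_interval_le cd(2) less_imp_le by metis
    then show "\<exists>l r. Inf K \<le> l \<and> l \<le> r \<and> r \<le> Sup K \<and> measure lebesgue (k ` K) \<le> \<bar>k r - k l\<bar>"
      using cd by auto
  qed
  then obtain L R where LR: "\<And>K. K \<in> \<K> \<Longrightarrow> Inf K \<le> L K \<and> L K \<le> R K \<and> R K \<le> Sup K \<and>
      measure lebesgue (k ` K) \<le> \<bar>k (R K) - k (L K)\<bar>"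
    by metis
  have apart: "Sup K \<le> Inf K' \<or> Sup K' \<le> Inf K" if KK: "K \<in> \<K>" "K' \<in> \<K>" "K \<noteq> K'" for K K'
  proof -
    obtain c d where cd: "K = {c..d}" "c < d" using intervals[OF KK(1)] by blast
    obtain c' d' where cd': "K' = {c'..d'}" "c' < d'" using intervals[OF KK(2)] by blast
    have "interior K \<inter> interior K' = {}" using disj KK unfolding pairwise_def by blast
    then show ?thesis using interval_interiors_disjoint_cases[of c d c' d'] cd cd' by auto
  qed
  obtain h where h: "bij_betw h {..<card \<K>} \<K>"
    using ex_bij_betw_nat_finite[OF fin] atLeast0LessThan by metis
  have hK: "h i \<in> \<K>" if "i < card \<K>" for i using h that by (auto simp: bij_betw_def)
  have reindex: "(\<Sum>i<card \<K>. g (h i)) = (\<Sum>K\<in>\<K>. g K)" for g :: "real set \<Rightarrow> real"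
    using sum.reindex_bij_betw[OF h] by simp
  have "(\<Sum>K\<in>\<K>. R K - L K) \<le> (\<Sum>K\<in>\<K>. measure lebesgue K)"
    using LR Klen by (intro sum_mono) (metis diff_mono)
  also have "\<dots> = measure lebesgue (\<Union>\<K>)"
  proof (rule measure_negligible_finite_Union[symmetric, OF fin Kmeas])
    show "pairwise (\<lambda>S T. negligible (S \<inter> T)) \<K>"
      unfolding pairwise_def
    proof (intro ballI impI)
      fix K K' assume KK: "K \<in> \<K>" "K' \<in> \<K>" "K \<noteq> K'"
      have "{Inf K..Sup K} \<inter> {Inf K'..Sup K'} \<subseteq> {Sup K} \<or> {Inf K..Sup K} \<inter> {Inf K'..Sup K'} \<subseteq> {Sup K'}"
        using apart[OF KK] K(2)[OF KK(1)] K(2)[OF KK(2)] by auto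
      then have "K \<inter> K' \<subseteq> {Sup K} \<or> K \<inter> K' \<subseteq> {Sup K'}" using K(1) KK by metis
      then show "negligible (K \<inter> K')" using negligible_subset negligible_sing by metis
    qed
  qed
  finally have "(\<Sum>i<card \<K>. R (h i) - L (h i)) < \<delta>"
    using len reindex[of "\<lambda>K. R K - L K"] by linarith
  moreover have "nonoverlapping_subintervals a b (card \<K>) (L \<circ> h) (R \<circ> h)"
  proof -
    have "a \<le> L (h i) \<and> L (h i) \<le> R (h i) \<and> R (h i) \<le> b" if "i < card \<K>" for i
      using LR[OF hK[OF that]] K(3,4)[OF hK[OF that]] by auto
    moreover have "R (h i) \<le> L (h i') \<or> R (h i') \<le> L (h i)"
      if i: "i < card \<K>" "i' < card \<K>" "i \<noteq> i'" for i i'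
    proof -
      have "h i \<noteq> h i'" using h i by (auto simp: bij_betw_def inj_on_def)
      then show ?thesis
        using apart[OF hK[OF i(1)] hK[OF i(2)]] LR[OF hK[OF i(1)]] LR[OF hK[OF i(2)]] by auto
    qed
    ultimately show ?thesis unfolding nonoverlapping_subintervals_def by simp
  qed
  ultimately have "(\<Sum>i<card \<K>. \<bar>k (R (h i)) - k (L (h i))\<bar>) < e"
    using small[of "card \<K>" "L \<circ> h" "R \<circ> h"] by simp
  then have "(\<Sum>K\<in>\<K>. \<bar>k (R K) - k (L K)\<bar>) < e" using reindex[of "\<lambda>K. \<bar>k (R K) - k (L K)\<bar>"] by simp
  have "measure lebesgue (\<Union>K\<in>\<K>. k ` K) \<le> (\<Sum>K\<in>\<K>. measure lebesgue (k ` K))"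
  proof (intro measure_UNION_le[OF fin] fmeasurableD lmeasurable_compact compact_continuous_image)
    fix K assume KK: "K \<in> \<K>"
    have "{Inf K..Sup K} \<subseteq> {a..b}" using K(3,4)[OF KK] by auto
    then show "continuous_on K k" using continuous_on_subset[OF k] K(1)[OF KK] by auto
    show "compact K" using compact_Icc[of "Inf K" "Sup K"] K(1)[OF KK] by simp
  qed
  also have "\<dots> \<le> (\<Sum>K\<in>\<K>. \<bar>k (R K) - k (L K)\<bar>)" using LR by (intro sum_mono) blast
  finally show ?thesis using \<open>(\<Sum>K\<in>\<K>. \<bar>k (R K) - k (L K)\<bar>) < e\<close> by simp
qed

lemma negligible_abs_continuous_image:
  fixes k :: "real \<Rightarrow> real"
  assumes ac: "abs_continuous_on_interval a b k" and N: "negligible N"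
  shows "negligible (k ` (N \<inter> {a..b}))"
proof (cases "a < b")
  case False
  then have "{a..b} \<subseteq> {a}" by auto
  then have "k ` (N \<inter> {a..b}) \<subseteq> {k a}" by blast
  then show ?thesis using negligible_subset negligible_sing by blast
next
  case ab: True
  define S where "S = N \<inter> {a..b}"
  have Smeas: "S \<in> lmeasurable" and S0: "measure lebesgue S = 0"
    using negligible_subset[OF N] negligible_iff_measure unfolding S_def by blast+
  have k: "continuous_on {a..b} k" using abs_continuous_on_interval_imp_continuous_on[OF ac] .
  show ?thesis unfolding S_def[symmetric] negligible_outer_le
  proof (intro allI impI)
    fix e :: real assume e: "e > 0"
    obtain \<delta> where \<delta>: "\<delta> > 0" and small: "\<And>n l r. nonoverlapping_subintervals a b n l r \<Longrightarrow>
        (\<Sum>i<n. r i - l i) < \<delta> \<Longrightarrow> (\<Sum>i<n. norm (k (r i) - k (l i))) < e / 2"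
      using abs_continuous_on_intervalE[OF ac, of "e / 2"] e by auto
    obtain \<D> where \<D>c: "countable \<D>"
        and \<D>K: "\<And>K. K \<in> \<D> \<Longrightarrow> K \<subseteq> cbox a b \<and> K \<noteq> {} \<and> (\<exists>c d. K = cbox c d)"
        and \<D>disj: "pairwise (\<lambda>A B. interior A \<inter> interior B = {}) \<D>"
        and \<D>int: "\<And>K. K \<in> \<D> \<Longrightarrow> box a b \<noteq> {} \<Longrightarrow> interior K \<noteq> {}"
        and \<D>S: "S \<subseteq> \<Union>\<D>" and \<D>meas: "\<Union>\<D> \<in> lmeasurable"
        and \<D>le: "measure lebesgue (\<Union>\<D>) \<le> measure lebesgue S + \<delta> / 2"
      by (rule measurable_outer_intervals_bounded[OF Smeas _ half_gt_zero[OF \<delta>]]) (auto simp: S_def)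
    have \<D>intervals: "\<exists>c d. K = {c..d} \<and> c < d \<and> a \<le> c \<and> d \<le> b" if K\<D>: "K \<in> \<D>" for K
    proof -
      obtain c d where K: "K = {c..d}" using \<D>K[OF K\<D>] by auto
      then have "c < d" using \<D>int[OF K\<D>] ab by auto
      moreover have "K \<subseteq> {a..b}" using \<D>K[OF K\<D>] by auto
      ultimately show ?thesis using K by auto
    qed
    have \<D>sets: "K \<in> sets lebesgue" if "K \<in> \<D>" for K using \<D>intervals[OF that] by auto
    show "\<exists>T. k ` S \<subseteq> T \<and> T \<in> lmeasurable \<and> measure lebesgue T \<le> e"
    proof (cases "\<D> = {}")
      case True
      then show ?thesis using \<D>S e by (intro exI[of _ "{}"]) auto
    next
      case False
      define T where "T i = k ` from_nat_into \<D> i" for i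
      have in\<D>: "from_nat_into \<D> i \<in> \<D>" for i using from_nat_into[OF False] .
      have Tmeas: "T i \<in> lmeasurable" for i
      proof -
        obtain c d where "from_nat_into \<D> i = {c..d}" "a \<le> c" "d \<le> b" using \<D>intervals[OF in\<D>] by blast
        moreover have "continuous_on {c..d} k" using calculation by (intro continuous_on_subset[OF k]) auto
        ultimately show ?thesis unfolding T_def by (simp add: compact_continuous_image lmeasurable_compact)
      qed
      have bound: "measure lebesgue (\<Union>i\<le>n. T i) \<le> e / 2" for n
      proof -
        have "(\<Union>i\<le>n. T i) = (\<Union>K\<in>from_nat_into \<D> ` {..n}. k ` K)" unfolding T_def by auto
        also have "measure lebesgue \<dots> \<le> e / 2"
        proof (rule measure_image_nonoverlapping_intervals_le[OF k small])
          have "from_nat_into \<D> ` {..n} \<subseteq> \<D>" using in\<D> by auto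
          then show "pairwise (\<lambda>K K'. interior K \<inter> interior K' = {}) (from_nat_into \<D> ` {..n})"
            using \<D>disj pairwise_subset by blast
          have "measure lebesgue (\<Union>(from_nat_into \<D> ` {..n})) \<le> measure lebesgue (\<Union>\<D>)"
            using \<open>from_nat_into \<D> ` {..n} \<subseteq> \<D>\<close> \<D>meas \<D>sets
            by (intro measure_mono_fmeasurable) (auto intro!: sets.finite_Union)
          then show "measure lebesgue (\<Union>(from_nat_into \<D> ` {..n})) < \<delta>" using \<D>le S0 \<delta> by simp
        qed (use in\<D> \<D>intervals in auto)
        finally show ?thesis .
      qed
      have "(\<Union>i. T i) \<in> lmeasurable" "measure lebesgue (\<Union>i. T i) \<le> e / 2"
        using fmeasurable_countable_Union[OF Tmeas bound] measure_countable_Union_le[OF Tmeas bound] by auto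
      moreover have "k ` S \<subseteq> (\<Union>i. T i)"
      proof
        fix y assume "y \<in> k ` S"
        then obtain x K where "x \<in> S" "y = k x" "K \<in> \<D>" "x \<in> K" using \<D>S by blast
        moreover obtain i where "K = from_nat_into \<D> i"
          using range_from_nat_into[OF False \<D>c] \<open>K \<in> \<D>\<close> by (metis rangeE)
        ultimately show "y \<in> (\<Union>i. T i)" unfolding T_def by blast
      qed
      ultimately show ?thesis using e by (intro exI[of _ "\<Union>i. T i"]) auto
    qed
  qed
qed

lemma last_crossing:
  fixes k :: "real \<Rightarrow> real"
  assumes k: "continuous_on {a..b} k" and ab: "a \<le> b" and y: "k a < y" "y < k b"
  obtains c where "c \<in> {a..<b}" "k c = y" "\<And>t. t \<in> {c<..b} \<Longrightarrow> y < k t"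
proof -
  define S where "S = {t \<in> {a..b}. k t = y}"
  have "closed S" unfolding S_def by (rule continuous_closed_preimage_constant[OF k]) simp
  moreover have "S \<noteq> {}" using IVT'[of k a y b, OF _ _ ab k] y unfolding S_def by force
  moreover have bdd: "bdd_above S" unfolding S_def by (auto intro: bdd_aboveI[of _ b])
  ultimately have "Sup S \<in> S" by (rule closed_contains_Sup[rotated 2])
  then have c: "Sup S \<in> {a..b}" "k (Sup S) = y" unfolding S_def by auto
  have "y < k t" if t: "t \<in> {Sup S<..b}" for t
  proof (rule ccontr)
    assume "\<not> y < k t"
    moreover have "continuous_on {t..b} k" using t c by (intro continuous_on_subset[OF k]) auto
    ultimately obtain x where "t \<le> x" "x \<le> b" "k x = y" using IVT'[of k t y b] y t by auto
    then have "x \<in> S" using t c unfolding S_def by auto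
    then show False using cSup_upper[OF _ bdd] \<open>t \<le> x\<close> t by force
  qed
  moreover have "Sup S \<noteq> b" using c y by auto
  ultimately show ?thesis using c by (intro that[of "Sup S"]) auto
qed

lemma abs_continuous_neg_deriv_imp_le:
  fixes k :: "real \<Rightarrow> real"
  assumes ab: "a \<le> b" and ac: "abs_continuous_on_interval a b k" and N: "negligible N"
    and deriv: "\<And>t. t \<in> {a..b} - N \<Longrightarrow> \<exists>d. (k has_real_derivative d) (at t within {a..b}) \<and> d < 0"
  shows "k b \<le> k a"
proof (rule ccontr)
  assume "\<not> k b \<le> k a"
  have k: "continuous_on {a..b} k" using abs_continuous_on_interval_imp_continuous_on[OF ac] .
  have "\<not> {k a<..<k b} \<subseteq> k ` (N \<inter> {a..b})"
  proof
    assume "{k a<..<k b} \<subseteq> k ` (N \<inter> {a..b})"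
    then have "negligible (box (k a) (k b))"
      using negligible_abs_continuous_image[OF ac N] negligible_subset by (metis box_real(1))
    moreover have "box (k a) (k b) \<noteq> {}" using \<open>\<not> k b \<le> k a\<close> by simp
    ultimately show False using negligible_interval(2) by blast
  qed
  then obtain y where y: "k a < y" "y < k b" "y \<notin> k ` (N \<inter> {a..b})" by (meson greaterThanLessThan_iff subsetI)
  obtain c where c: "c \<in> {a..<b}" "k c = y" and above: "\<And>t. t \<in> {c<..b} \<Longrightarrow> y < k t"
    using last_crossing[OF k ab y(1,2)] by blast
  then have "c \<notin> N" using y(3) by auto
  then obtain d where d: "(k has_real_derivative d) (at c within {a..b})" "d < 0" using deriv[of c] c by auto
  have "((\<lambda>x. (k x - k c) / (x - c)) \<longlongrightarrow> d) (at c within {c..b})"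
    using tendsto_within_subset[OF has_field_derivative_iff[THEN iffD1, OF d(1)]] c by auto
  moreover have "eventually (\<lambda>x. 0 \<le> (k x - k c) / (x - c)) (at c within {c..b})"
    unfolding eventually_at_filter using above c by (intro always_eventually) (auto simp: less_imp_le)
  moreover have "\<not> trivial_limit (at c within {c..b})" using at_within_Icc_at_right[of c b] c by simp
  ultimately have "0 \<le> d" by (rule tendsto_lowerbound)
  then show False using d(2) by simp
qed

lemma abs_continuous_inner_deriv_bound:
  fixes f :: "real \<Rightarrow> 'a::real_inner"
  assumes ab: "a \<le> b" and ac: "abs_continuous_on_interval a b f" and N: "negligible N"
    and deriv: "\<And>t. t \<in> {a..b} - N \<Longrightarrow> \<exists>v. (f has_vector_derivative v) (at t within {a..b}) \<and> inner e v \<le> c"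
  shows "inner e (f b - f a) \<le> c * (b - a)"
proof -
  have main: "inner e (f b - f a) \<le> (c + \<epsilon>) * (b - a)" if \<epsilon>: "\<epsilon> > 0" for \<epsilon>
  proof -
    define k where "k t = inner e (f t) - (c + \<epsilon>) * t" for t
    have "abs_continuous_on_interval a b k"
    proof (rule abs_continuous_on_interval_dominated[OF ac, of "norm e" "\<bar>c + \<epsilon>\<bar>"])
      fix l r assume lr: "a \<le> l" "l \<le> r" "r \<le> b"
      have "norm (k r - k l) = \<bar>inner e (f r - f l) - (c + \<epsilon>) * (r - l)\<bar>"
        by (simp add: k_def inner_diff_right algebra_simps)
      also have "\<dots> \<le> \<bar>inner e (f r - f l)\<bar> + \<bar>(c + \<epsilon>) * (r - l)\<bar>"
        by (rule abs_triangle_ineq4)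
      also have "\<dots> \<le> norm e * norm (f r - f l) + \<bar>c + \<epsilon>\<bar> * (r - l)"
        using Cauchy_Schwarz_ineq2[of e "f r - f l"] lr by (simp add: abs_mult)
      finally show "norm (k r - k l) \<le> norm e * norm (f r - f l) + \<bar>c + \<epsilon>\<bar> * (r - l)" .
    qed auto
    then have "k b \<le> k a"
    proof (rule abs_continuous_neg_deriv_imp_le[OF ab _ N])
      fix t assume "t \<in> {a..b} - N"
      then obtain v where v: "(f has_vector_derivative v) (at t within {a..b})" "inner e v \<le> c"
        using deriv by blast
      have "((\<lambda>t. inner e (f t)) has_real_derivative inner e v) (at t within {a..b})"
        using bounded_linear.has_vector_derivative[OF bounded_linear_inner_right v(1)]
        by (simp add: has_real_derivative_iff_has_vector_derivative)
      then have "(k has_real_derivative (inner e v - (c + \<epsilon>))) (at t within {a..b})"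
        unfolding k_def by (auto intro!: derivative_eq_intros)
      then show "\<exists>d. (k has_real_derivative d) (at t within {a..b}) \<and> d < 0" using v(2) \<epsilon> by force
    qed
    then show ?thesis by (simp add: k_def inner_diff_right algebra_simps)
  qed
  show ?thesis
  proof (rule field_le_epsilon)
    fix \<epsilon> :: real assume "\<epsilon> > 0"
    then have "inner e (f b - f a) \<le> (c + \<epsilon> / (b - a + 1)) * (b - a)"
      using ab main by simp
    also have "\<dots> \<le> c * (b - a) + \<epsilon>"
      using ab \<open>\<epsilon> > 0\<close> by (simp add: field_simps)
    finally show "inner e (f b - f a) \<le> c * (b - a) + \<epsilon>" .
  qed
qed

section \<open>Flow arcs\<close>

definition flow_arc :: "'a::euclidean_space set \<Rightarrow> ('a \<Rightarrow> 'a set) \<Rightarrow> (real \<Rightarrow> 'a) \<Rightarrow> real \<Rightarrow> real \<Rightarrow> bool" where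
  "flow_arc C F f a b \<longleftrightarrow> a \<le> b \<and> abs_continuous_on_interval a b f \<and> (\<forall>t\<in>{a<..<b}. f t \<in> C) \<and>
     (\<exists>N. negligible N \<and> (\<forall>t\<in>{a..b} - N. \<exists>v. (f has_vector_derivative v) (at t within {a..b}) \<and> v \<in> F (f t)))"

lemma flow_arcD:
  assumes "flow_arc C F f a b"
  shows "a \<le> b" "abs_continuous_on_interval a b f" "\<And>t. t \<in> {a<..<b} \<Longrightarrow> f t \<in> C"
    "continuous_on {a..b} f"
  using assms abs_continuous_on_interval_imp_continuous_on unfolding flow_arc_def by auto

lemma flow_arc_derivE:
  assumes "flow_arc C F f a b"
  obtains N where "negligible N"
    "\<And>t. t \<in> {a..b} - N \<Longrightarrow> \<exists>v. (f has_vector_derivative v) (at t within {a..b}) \<and> v \<in> F (f t)"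
  using assms unfolding flow_arc_def by blast

lemma flow_arc_subinterval:
  assumes arc: "flow_arc C F f a b" and "a \<le> a'" "a' \<le> b'" "b' \<le> b"
  shows "flow_arc C F f a' b'"
proof -
  obtain N where N: "negligible N" and deriv:
    "\<And>t. t \<in> {a..b} - N \<Longrightarrow> \<exists>v. (f has_vector_derivative v) (at t within {a..b}) \<and> v \<in> F (f t)"
    using flow_arc_derivE[OF arc] by blast
  have "\<exists>v. (f has_vector_derivative v) (at t within {a'..b'}) \<and> v \<in> F (f t)" if "t \<in> {a'..b'} - N" for t
    using deriv[of t] that assms(2-4) has_vector_derivative_within_subset[of f _ t "{a..b}" "{a'..b'}"]
    by fastforce
  then show ?thesis
    using assms flow_arcD[OF arc] N abs_continuous_on_interval_subset[of a b f a' b'] unfolding flow_arc_def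
    by auto
qed

lemma flow_arc_inner_bound:
  assumes arc: "flow_arc C F f a b" and bound: "\<And>t y. t \<in> {a<..<b} \<Longrightarrow> y \<in> F (f t) \<Longrightarrow> inner e y \<le> c"
  shows "inner e (f b - f a) \<le> c * (b - a)"
proof -
  obtain N where N: "negligible N" and deriv:
    "\<And>t. t \<in> {a..b} - N \<Longrightarrow> \<exists>v. (f has_vector_derivative v) (at t within {a..b}) \<and> v \<in> F (f t)"
    using flow_arc_derivE[OF arc] by blast
  show ?thesis
  proof (rule abs_continuous_inner_deriv_bound[OF flow_arcD(1,2)[OF arc]])
    show "negligible (N \<union> {a, b})" using N by auto
    fix t assume t: "t \<in> {a..b} - (N \<union> {a, b})"
    then show "\<exists>v. (f has_vector_derivative v) (at t within {a..b}) \<and> inner e v \<le> c"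
      using deriv[of t] bound[of t] by auto
  qed
qed

lemma flow_arc_norm_bound:
  assumes arc: "flow_arc C F f a b" and bound: "\<And>t y. t \<in> {a<..<b} \<Longrightarrow> y \<in> F (f t) \<Longrightarrow> norm y \<le> M"
    and "M \<ge> 0"
  shows "norm (f b - f a) \<le> M * (b - a)"
proof -
  define e where "e = f b - f a"
  have "inner e e \<le> (norm e * M) * (b - a)"
    unfolding e_def
  proof (rule flow_arc_inner_bound[OF arc])
    fix t y assume "t \<in> {a<..<b}" "y \<in> F (f t)"
    then show "inner (f b - f a) y \<le> norm (f b - f a) * M"
      using bound Cauchy_Schwarz_ineq2[of "f b - f a" y]
      by (meson abs_le_D1 mult_left_mono norm_ge_zero order_trans)
  qed
  then have "norm e * norm e \<le> norm e * (M * (b - a))"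
    by (simp add: dot_square_norm power2_eq_square algebra_simps)
  moreover have "M * (b - a) \<ge> 0" using flow_arcD(1)[OF arc] \<open>M \<ge> 0\<close> by simp
  ultimately show ?thesis
    unfolding e_def[symmetric] by (cases "norm e = 0") (auto simp: mult_le_cancel_left_pos)
qed

lemma flow_arc_reflect:
  assumes arc: "flow_arc C F f a b"
  shows "flow_arc C (\<lambda>x. uminus ` F x) (\<lambda>t. f (- t)) (- b) (- a)"
proof -
  obtain N where N: "negligible N" and deriv:
    "\<And>t. t \<in> {a..b} - N \<Longrightarrow> \<exists>v. (f has_vector_derivative v) (at t within {a..b}) \<and> v \<in> F (f t)"
    using flow_arc_derivE[OF arc] by blast
  have "negligible (uminus ` N)"
  proof (rule negligible_locally_Lipschitz_image[OF _ N])
    show "\<exists>T B. open T \<and> x \<in> T \<and> (\<forall>y\<in>N \<inter> T. norm (- y - - x) \<le> B * norm (y - x))" for x :: real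
      by (rule exI[of _ UNIV], rule exI[of _ 1]) (simp add: abs_minus_commute)
  qed simp
  moreover have "\<exists>v. ((\<lambda>t. f (- t)) has_vector_derivative v) (at t within {-b..-a}) \<and> v \<in> uminus ` F (f (- t))"
    if t: "t \<in> {-b..-a} - uminus ` N" for t
  proof -
    have "- t \<in> {a..b} - N" using t by (auto simp: image_iff)
    then obtain v where v: "(f has_vector_derivative v) (at (- t) within {a..b})" "v \<in> F (f (- t))"
      using deriv by blast
    have "(uminus has_vector_derivative (-1)) (at t within {-b..-a})"
      using has_vector_derivative_minus[OF has_vector_derivative_id] by (simp add: fun_Compl_def)
    then have "((f \<circ> uminus) has_vector_derivative ((-1) *\<^sub>R v)) (at t within {-b..-a})"
      by (rule vector_diff_chain_within) (use v(1) in simp)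
    then show ?thesis using v(2) by (intro exI[of _ "- v"]) (auto simp: o_def)
  qed
  moreover have "\<forall>t\<in>{-b<..<-a}. f (- t) \<in> C" using flow_arcD(3)[OF arc] by auto
  ultimately show ?thesis
    unfolding flow_arc_def using flow_arcD(1,2)[OF arc] abs_continuous_on_interval_reflect
    by (intro conjI exI[of _ "uminus ` N"]) auto
qed

text \<open>Only a local velocity bound is needed: before leaving \<open>cball 0 (R + 1)\<close> the arc moves with
  speed at most \<open>M\<close>, so it cannot leave within time \<open>1 / M\<close>.\<close>

lemma flow_arc_escape_forward:
  assumes speed: "\<And>z y. z \<in> C \<Longrightarrow> norm z \<le> R + 1 \<Longrightarrow> y \<in> F z \<Longrightarrow> norm y \<le> M" and "M > 0"
    and arc: "flow_arc C F f a b" and start: "norm (f a) \<le> R" and short: "M * (b - a) < 1"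
  shows "norm (f b - f a) \<le> M * (b - a)"
proof -
  have inC: "\<And>t. t \<in> {a<..<b} \<Longrightarrow> f t \<in> C" using flow_arcD[OF arc] by blast
  define S where "S = {a..b} \<inter> (\<lambda>t. norm (f t - f a)) -` {1..}"
  have near: "norm (f t) \<le> R + 1" if "norm (f t - f a) \<le> 1" for t
    using norm_triangle_ineq[of "f t - f a" "f a"] that start by simp
  have bound: "norm (f c - f a) \<le> M * (c - a)" if c: "c \<in> {a..b}" "\<And>t. t \<in> {a<..<c} \<Longrightarrow> t \<notin> S" for c
  proof (rule flow_arc_norm_bound[OF flow_arc_subinterval[OF arc order_refl]])
    fix t y assume t: "t \<in> {a<..<c}" and y: "y \<in> F (f t)"
    then have "\<not> 1 \<le> norm (f t - f a)" using c unfolding S_def by auto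
    then have "norm (f t - f a) \<le> 1" by simp
    moreover have "f t \<in> C" using inC t c by auto
    ultimately show "norm y \<le> M" using speed near y by blast
  qed (use c \<open>M > 0\<close> in auto)
  show ?thesis
  proof (cases "S = {}")
    case True
    then show ?thesis using bound[of b] flow_arcD(1)[OF arc] by auto
  next
    case False
    have "closed S" unfolding S_def
      using flow_arcD(4)[OF arc] by (intro continuous_closed_preimage) (auto intro!: continuous_intros)
    moreover have bdd: "bdd_below S" unfolding S_def by (auto intro: bdd_belowI[of _ a])
    ultimately have c: "Inf S \<in> S" using False closed_contains_Inf by blast
    moreover have "t \<notin> S" if "t \<in> {a<..<Inf S}" for t using cInf_lower[OF _ bdd, of t] that by force
    moreover have "Inf S \<in> {a..b}" using c unfolding S_def by auto
    ultimately have "norm (f (Inf S) - f a) \<le> M * (Inf S - a)" by (intro bound) auto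
    also have "\<dots> \<le> M * (b - a)" using c \<open>M > 0\<close> unfolding S_def by (intro mult_left_mono) auto
    finally show ?thesis using c short unfolding S_def by auto
  qed
qed

lemma flow_arc_escape_backward:
  assumes speed: "\<And>z y. z \<in> C \<Longrightarrow> norm z \<le> R + 1 \<Longrightarrow> y \<in> F z \<Longrightarrow> norm y \<le> M" and "M > 0"
    and arc: "flow_arc C F f a b" and final: "norm (f b) \<le> R" and short: "M * (b - a) < 1"
  shows "norm (f b - f a) \<le> M * (b - a)"
proof -
  have "norm (f (- (- a)) - f (- (- b))) \<le> M * (- a - - b)"
  proof (rule flow_arc_escape_forward[OF _ \<open>M > 0\<close> flow_arc_reflect[OF arc]])
    show "norm y \<le> M" if "z \<in> C" "norm z \<le> R + 1" "y \<in> uminus ` F z" for z y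
      using speed that by auto
  qed (use final short in auto)
  then show ?thesis by (simp add: norm_minus_commute)
qed

section \<open>Set-valued maps and tangency\<close>

lemma locally_bounded_rel_cball_bound:
  fixes F :: "'a::euclidean_space \<Rightarrow> 'b::real_normed_vector set"
  assumes lb: "locally_bounded_rel F C" and C: "closed C"
  obtains M where "M > 0" "\<And>z y. z \<in> C \<Longrightarrow> norm z \<le> R \<Longrightarrow> y \<in> F z \<Longrightarrow> norm y \<le> M"
proof -
  obtain e where e: "\<And>x. x \<in> C \<Longrightarrow> e x > 0 \<and> bounded (\<Union>y\<in>C \<inter> ball x (e x). F y)"
    using lb unfolding locally_bounded_rel_def by metis
  define K where "K = C \<inter> cball 0 R"
  have "compact K" unfolding K_def using C by (simp add: closed_Int_compact)
  moreover have "K \<subseteq> (\<Union>x\<in>K. ball x (e x))" using e unfolding K_def by force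
  ultimately obtain T where T: "T \<subseteq> K" "finite T" "K \<subseteq> (\<Union>x\<in>T. ball x (e x))"
    using compactE_image[of K K "\<lambda>x. ball x (e x)"] by blast
  have "bounded (\<Union>x\<in>T. \<Union>y\<in>C \<inter> ball x (e x). F y)"
    using T e unfolding K_def by (intro bounded_UN) auto
  then obtain M where M: "M > 0" "\<And>y. y \<in> (\<Union>x\<in>T. \<Union>y\<in>C \<inter> ball x (e x). F y) \<Longrightarrow> norm y \<le> M"
    using bounded_pos by metis
  show ?thesis
  proof (rule that[OF M(1)])
    fix z y assume z: "z \<in> C" "norm z \<le> R" and y: "y \<in> F z"
    then obtain x where "x \<in> T" "z \<in> ball x (e x)" using T unfolding K_def by auto
    then show "norm y \<le> M" using M(2)[of y] z y by blast
  qed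
qed

lemma osc_rel_closed_values:
  assumes "osc_rel F C" "x \<in> C"
  shows "closed (F x)"
  unfolding closed_sequential_limits
  using assms unfolding osc_rel_def by (metis tendsto_const)

lemma osc_rel_upper_semicontinuous:
  fixes F :: "'a::euclidean_space \<Rightarrow> 'b::euclidean_space set"
  assumes osc: "osc_rel F C" and lb: "locally_bounded_rel F C" and v: "v \<in> C" and \<eta>: "\<eta> > 0"
  obtains r where "r > 0" "\<And>z y. z \<in> C \<Longrightarrow> dist z v < r \<Longrightarrow> y \<in> F z \<Longrightarrow> \<exists>y'\<in>F v. dist y y' < \<eta>"
proof -
  have "\<exists>r>0. \<forall>z\<in>C. dist z v < r \<longrightarrow> (\<forall>y\<in>F z. \<exists>y'\<in>F v. dist y y' < \<eta>)"
  proof (rule ccontr)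
    assume "\<not> ?thesis"
    then have far: "\<exists>z y. z \<in> C \<and> dist z v < r \<and> y \<in> F z \<and> (\<forall>y'\<in>F v. \<eta> \<le> dist y y')" if "r > 0" for r
      using that by (meson not_le)
    obtain e0 where e0: "e0 > 0" "bounded (\<Union>y\<in>C \<inter> ball v e0. F y)"
      using lb v unfolding locally_bounded_rel_def by blast
    have "\<exists>z y. z \<in> C \<and> dist z v < min e0 (inverse (real (Suc n))) \<and> y \<in> F z \<and> (\<forall>y'\<in>F v. \<eta> \<le> dist y y')"
      for n using far[of "min e0 (inverse (real (Suc n)))"] e0(1) by simp
    then obtain z y where zy: "\<And>n. z n \<in> C" "\<And>n. dist (z n) v < min e0 (inverse (real (Suc n)))"
        "\<And>n. y n \<in> F (z n)" "\<And>n y'. y' \<in> F v \<Longrightarrow> \<eta> \<le> dist (y n) y'"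
      by metis
    have "range y \<subseteq> (\<Union>y\<in>C \<inter> ball v e0. F y)" using zy by (force simp: dist_commute)
    then have "bounded (range y)" using e0(2) bounded_subset by blast
    then obtain l \<sigma> where \<sigma>: "strict_mono \<sigma>" "(y \<circ> \<sigma>) \<longlonglongrightarrow> l" using bounded_imp_convergent_subsequence by blast
    have "(\<lambda>n. dist (z n) v) \<longlonglongrightarrow> 0"
      by (rule Lim_null_comparison[OF _ LIMSEQ_inverse_real_of_nat])
        (use zy(2) in \<open>auto intro: always_eventually less_imp_le\<close>)
    then have "(z \<circ> \<sigma>) \<longlonglongrightarrow> v" using tendsto_dist_iff LIMSEQ_subseq_LIMSEQ \<sigma>(1) by blast
    then have "l \<in> F v" using osc v zy(1,3) \<sigma>(2) unfolding osc_rel_def by (metis comp_apply)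
    then have "\<eta> \<le> dist ((y \<circ> \<sigma>) n) l" for n using zy(4) by simp
    moreover have "(\<lambda>n. dist ((y \<circ> \<sigma>) n) l) \<longlonglongrightarrow> 0" using \<sigma>(2) tendsto_dist_iff by blast
    ultimately show False using \<eta> by (metis LIMSEQ_le_const not_le)
  qed
  then show ?thesis using that by blast
qed

lemma osc_rel_uminus:
  assumes "osc_rel F C"
  shows "osc_rel (\<lambda>x. uminus ` F x) C"
  unfolding osc_rel_def
proof (intro ballI allI impI)
  fix x xs ys y
  assume x: "x \<in> C" and seq: "(\<forall>i. xs i \<in> C \<and> ys i \<in> uminus ` F (xs i)) \<and> xs \<longlonglongrightarrow> x \<and> ys \<longlonglongrightarrow> y"
  have "- ys i \<in> F (xs i)" for i
  proof -
    have "ys i \<in> uminus ` F (xs i)" using seq by blast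
    then obtain z where "z \<in> F (xs i)" "ys i = - z" by blast
    then show ?thesis by simp
  qed
  moreover have "(\<lambda>i. - ys i) \<longlonglongrightarrow> - y" using seq tendsto_minus by blast
  ultimately have "(\<forall>i. xs i \<in> C \<and> - ys i \<in> F (xs i)) \<and> xs \<longlonglongrightarrow> x \<and> (\<lambda>i. - ys i) \<longlonglongrightarrow> - y"
    using seq by simp
  then have "- y \<in> F x" using assms x unfolding osc_rel_def by (elim ballE allE impE) auto
  then show "y \<in> uminus ` F x" by (metis image_eqI minus_minus)
qed

lemma locally_bounded_rel_uminus:
  assumes "locally_bounded_rel F C"
  shows "locally_bounded_rel (\<lambda>x. uminus ` F x) C"
  unfolding locally_bounded_rel_def
proof
  fix x assume "x \<in> C"
  then obtain e where "e > 0" "bounded (\<Union>y\<in>C \<inter> ball x e. F y)"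
    using assms unfolding locally_bounded_rel_def by blast
  moreover have "(\<Union>y\<in>C \<inter> ball x e. uminus ` F y) = uminus ` (\<Union>y\<in>C \<inter> ball x e. F y)" by blast
  ultimately show "\<exists>e>0. bounded (\<Union>y\<in>C \<inter> ball x e. uminus ` F y)"
    by (metis bounded_uminus)
qed

lemma tangent_coneI:
  fixes x w :: "'a::real_normed_vector"
  assumes pos: "\<And>i. \<tau> i > 0" and "\<tau> \<longlonglongrightarrow> 0" and inC: "\<And>i. x + \<tau> i *\<^sub>R ws i \<in> C" and "ws \<longlonglongrightarrow> w"
  shows "w \<in> tangent_cone C x"
proof -
  obtain \<sigma> where \<sigma>: "strict_mono \<sigma>" "monoseq (\<lambda>n. \<tau> (\<sigma> n))" using seq_monosub[of \<tau>] by blast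
  have \<tau>0: "(\<lambda>n. \<tau> (\<sigma> n)) \<longlonglongrightarrow> 0" using LIMSEQ_subseq_LIMSEQ[OF \<open>\<tau> \<longlonglongrightarrow> 0\<close> \<sigma>(1)] by (simp add: o_def)
  have "\<not> incseq (\<lambda>n. \<tau> (\<sigma> n))"
  proof
    assume "incseq (\<lambda>n. \<tau> (\<sigma> n))"
    then have "\<tau> (\<sigma> 0) \<le> 0" using LIMSEQ_le[OF tendsto_const \<tau>0] unfolding incseq_def by blast
    then show False using pos[of "\<sigma> 0"] by simp
  qed
  then have "decseq (\<lambda>n. \<tau> (\<sigma> n))" using \<sigma>(2) unfolding monoseq_iff by blast
  moreover have "(\<lambda>n. ws (\<sigma> n)) \<longlonglongrightarrow> w" using LIMSEQ_subseq_LIMSEQ[OF \<open>ws \<longlonglongrightarrow> w\<close> \<sigma>(1)] by (simp add: o_def)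
  ultimately show ?thesis unfolding tangent_cone_def
    using pos inC \<tau>0 by (intro CollectI exI[of _ "\<lambda>n. \<tau> (\<sigma> n)"] exI[of _ "\<lambda>n. ws (\<sigma> n)"]) auto
qed

text \<open>Limits of average velocities of flow arcs shrinking to \<open>v\<close> lie in \<open>F v\<close>: otherwise a
  hyperplane separates the limit from the closed convex set \<open>F v\<close>, and by upper semicontinuity
  it also separates it from all velocities near \<open>v\<close>.\<close>

lemma average_velocity_limit_in_values:
  fixes F :: "'a::euclidean_space \<Rightarrow> 'a set"
  assumes osc: "osc_rel F C" and lb: "locally_bounded_rel F C" and v: "v \<in> C" and cv: "convex (F v)"
    and arcs: "\<And>n. flow_arc C F (f n) (a n) (b n)" and len: "\<And>n. a n < b n"
    and near: "\<And>n t. t \<in> {a n..b n} \<Longrightarrow> norm (f n t - v) \<le> r n" and r: "r \<longlonglongrightarrow> 0"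
    and avg: "(\<lambda>n. (f n (b n) - f n (a n)) /\<^sub>R (b n - a n)) \<longlonglongrightarrow> w"
  shows "w \<in> F v"
proof (rule ccontr)
  assume "w \<notin> F v"
  then obtain e c where ew: "inner e w < c" and ey: "\<And>y. y \<in> F v \<Longrightarrow> inner e y > c"
    using separating_hyperplane_closed_point[OF cv osc_rel_closed_values[OF osc v]] by blast
  define \<eta> where "\<eta> = (c - inner e w) / (2 * (norm e + 1))"
  have "2 * (norm e + 1) > 0" by (simp add: add_nonneg_pos)
  then have "\<eta> > 0" unfolding \<eta>_def using ew by (intro divide_pos_pos) auto
  have "norm e * \<eta> \<le> (norm e + 1) * \<eta>" using \<open>\<eta> > 0\<close> by (simp add: mult_right_mono)
  also have "\<dots> = (c - inner e w) / 2"
    unfolding \<eta>_def using \<open>2 * (norm e + 1) > 0\<close> by (simp add: field_simps)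
  finally have \<eta>: "\<eta> > 0" "norm e * \<eta> < c - inner e w" using \<open>\<eta> > 0\<close> ew by auto
  obtain r0 where r0: "r0 > 0"
    and usc: "\<And>z y. z \<in> C \<Longrightarrow> dist z v < r0 \<Longrightarrow> y \<in> F z \<Longrightarrow> \<exists>y'\<in>F v. dist y y' < \<eta>"
    using osc_rel_upper_semicontinuous[OF osc lb v \<eta>(1)] by blast
  have bound: "c - norm e * \<eta> \<le> inner e y" if zy: "z \<in> C" "dist z v < r0" "y \<in> F z" for z y
  proof -
    obtain y' where y': "y' \<in> F v" "dist y y' < \<eta>" using usc[OF zy] by blast
    have "inner e (y' - y) \<le> norm e * \<eta>"
      using Cauchy_Schwarz_ineq2[of e "y' - y"] y'(2) \<eta>(1)
      by (smt (verit, best) dist_norm mult_left_mono norm_ge_zero norm_minus_commute)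
    then show ?thesis using ey[OF y'(1)] by (simp add: inner_diff_right)
  qed
  obtain n0 where n0: "\<And>n. n \<ge> n0 \<Longrightarrow> r n < r0"
    using order_tendstoD(2)[OF r r0] by (auto simp: eventually_sequentially)
  have "c - norm e * \<eta> \<le> inner e ((f n (b n) - f n (a n)) /\<^sub>R (b n - a n))" if "n \<ge> n0" for n
  proof -
    have "inner (- e) (f n (b n) - f n (a n)) \<le> (- (c - norm e * \<eta>)) * (b n - a n)"
    proof (rule flow_arc_inner_bound[OF arcs])
      fix t y assume "t \<in> {a n<..<b n}" "y \<in> F (f n t)"
      moreover from this have "dist (f n t) v < r0" using near[of t n] n0[OF that] by (simp add: dist_norm)
      ultimately show "inner (- e) y \<le> - (c - norm e * \<eta>)"
        using bound flow_arcD(3)[OF arcs] by fastforce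
    qed
    then have "(c - norm e * \<eta>) * (b n - a n) \<le> inner e (f n (b n) - f n (a n))"
      by (simp add: algebra_simps)
    then show ?thesis using len[of n] unfolding inner_scaleR_right by (simp add: field_simps)
  qed
  then have "c - norm e * \<eta> \<le> inner e w"
    by (intro LIMSEQ_le_const[OF tendsto_inner[OF tendsto_const avg]]) auto
  then show False using \<eta>(2) by simp
qed

lemma slow_null_sequence:
  fixes d :: "nat \<Rightarrow> real"
  assumes d: "d \<longlonglongrightarrow> 0" "\<And>n. d n \<ge> 0" and "\<kappa> > 0"
  obtains h where "\<And>n. 0 < h n" "\<And>n. h n \<le> \<kappa>" "h \<longlonglongrightarrow> 0" "(\<lambda>n. d n / h n) \<longlonglongrightarrow> 0"
proof -
  define h where "h n = min (sqrt (d n) + inverse (real (Suc n))) \<kappa>" for n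
  have pos: "0 < h n" for n unfolding h_def using d(2)[of n] \<open>\<kappa> > 0\<close> by (simp add: add_nonneg_pos)
  have le: "h n \<le> \<kappa>" for n unfolding h_def by simp
  have "h \<longlonglongrightarrow> 0"
  proof (rule Lim_null_comparison[OF always_eventually])
    have "norm (h n) = h n" for n using pos[of n] by simp
    moreover have "h n \<le> sqrt (d n) + inverse (real (Suc n))" for n unfolding h_def by (rule min.cobounded1)
    ultimately show "\<forall>n. norm (h n) \<le> sqrt (d n) + inverse (real (Suc n))" by simp
    show "(\<lambda>n. sqrt (d n) + inverse (real (Suc n))) \<longlonglongrightarrow> 0"
      using tendsto_add[OF tendsto_real_sqrt[OF d(1)] LIMSEQ_inverse_real_of_nat] by simp
  qed
  have "d n / h n \<le> sqrt (d n) + d n / \<kappa>" for n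
  proof (cases "h n = \<kappa>")
    case False
    then have "h n = sqrt (d n) + inverse (real (Suc n))" unfolding h_def by linarith
    moreover have "d n \<le> sqrt (d n) * (sqrt (d n) + inverse (real (Suc n)))"
      using d(2)[of n] by (simp add: distrib_left)
    ultimately have "d n / h n \<le> sqrt (d n)" using pos[of n] by (simp add: divide_le_eq mult.commute)
    moreover have "0 \<le> d n / \<kappa>" using d(2)[of n] \<open>\<kappa> > 0\<close> by simp
    ultimately show ?thesis by linarith
  qed (use d(2)[of n] in simp)
  moreover have "norm (d n / h n) = d n / h n" for n using pos[of n] d(2)[of n] by simp
  ultimately have "\<forall>n. norm (d n / h n) \<le> sqrt (d n) + d n / \<kappa>" by simp
  then have "(\<lambda>n. d n / h n) \<longlonglongrightarrow> 0"
  proof (rule Lim_null_comparison[OF always_eventually])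
    show "(\<lambda>n. sqrt (d n) + d n / \<kappa>) \<longlonglongrightarrow> 0"
      using tendsto_add[OF tendsto_real_sqrt[OF d(1)] tendsto_divide[OF d(1) tendsto_const]] \<open>\<kappa> > 0\<close> by simp
  qed
  with pos le \<open>h \<longlonglongrightarrow> 0\<close> show ?thesis by (rule that)
qed

text \<open>Flow arcs of length at least \<open>\<tau>\<close> whose initial points converge to \<open>v\<close> produce a velocity
  in \<open>F v\<close> that is tangent to \<open>C\<close> at \<open>v\<close>: take difference quotients over time steps \<open>h\<^sub>n \<rightarrow> 0\<close>
  that are large compared with the distance of the initial point to \<open>v\<close>.\<close>

lemma flow_arc_limit_tangent:
  fixes F :: "'a::euclidean_space \<Rightarrow> 'a set"
  assumes C: "closed C" and osc: "osc_rel F C" and lb: "locally_bounded_rel F C"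
    and cv: "\<And>x. x \<in> C \<Longrightarrow> convex (F x)" and "\<tau> > 0"
    and arcs: "\<And>n. flow_arc C F (f n) (a n) (b n)" and len: "\<And>n. a n + \<tau> \<le> b n"
    and lim: "(\<lambda>n. f n (a n)) \<longlonglongrightarrow> v"
  shows "v \<in> C \<and> F v \<inter> tangent_cone C v \<noteq> {}"
proof -
  obtain R where R: "\<And>n. norm (f n (a n)) \<le> R"
    using convergent_imp_bounded[OF lim] unfolding bounded_iff by auto
  obtain M where "M > 0" and speed: "\<And>z y. z \<in> C \<Longrightarrow> norm z \<le> R + 1 \<Longrightarrow> y \<in> F z \<Longrightarrow> norm y \<le> M"
    using locally_bounded_rel_cball_bound[OF lb C] by blast
  define d where "d n = norm (f n (a n) - v)" for n
  have d0: "d \<longlonglongrightarrow> 0" unfolding d_def using tendsto_norm_zero[OF LIM_zero[OF lim]] .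
  obtain h where h: "\<And>n. 0 < h n" "\<And>n. h n \<le> min (\<tau> / 2) (1 / (2 * M))" "h \<longlonglongrightarrow> 0"
      and dh: "(\<lambda>n. d n / h n) \<longlonglongrightarrow> 0"
    using slow_null_sequence[OF d0, of "min (\<tau> / 2) (1 / (2 * M))"] \<open>\<tau> > 0\<close> \<open>M > 0\<close>
    unfolding d_def by auto
  have h\<tau>: "h n \<le> \<tau> / 2" for n using h(2)[of n] by simp
  have hM: "M * h n \<le> 1 / 2" for n
  proof -
    have "M * h n \<le> M * (1 / (2 * M))" using h(2)[of n] \<open>M > 0\<close> by (intro mult_left_mono) auto
    then show ?thesis using \<open>M > 0\<close> by simp
  qed
  have short: "M * h n < 1" "a n + h n < b n" "flow_arc C F (f n) (a n) (a n + h n)" for n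
    using h(1)[of n] len[of n] h\<tau>[of n] hM[of n] \<open>\<tau> > 0\<close> \<open>M > 0\<close>
      flow_arc_subinterval[OF arcs, of n "a n" "a n + h n"]
    by auto
  have near: "norm (f n t - v) \<le> M * h n + d n" if "t \<in> {a n..a n + h n}" for n t
  proof -
    have "M * (t - a n) \<le> M * h n" using that \<open>M > 0\<close> by simp
    moreover have "norm (f n t - f n (a n)) \<le> M * (t - a n)"
      using that short(1)[of n] calculation
      by (intro flow_arc_escape_forward[OF speed \<open>M > 0\<close> flow_arc_subinterval[OF short(3)] R]) auto
    ultimately show ?thesis using norm_triangle_ineq[of "f n t - f n (a n)" "f n (a n) - v"]
      unfolding d_def by simp
  qed
  have near0: "(\<lambda>n. M * h n + d n) \<longlonglongrightarrow> 0"
    using tendsto_add[OF tendsto_mult_right_zero[OF h(3)] d0] by simp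
  define p where "p n = f n (a n + h n)" for n
  define w where "w n = (p n - v) /\<^sub>R h n" for n
  have pC: "p n \<in> C" for n
    unfolding p_def using flow_arcD(3)[OF arcs] h(1)[of n] short(2)[of n] by simp
  have w_bound: "norm (w n) \<le> M + d n / h n" for n
  proof -
    have "norm (w n) = norm (p n - v) / h n" using h(1)[of n] unfolding w_def norm_scaleR by (simp add: divide_inverse_commute)
    also have "\<dots> \<le> (M * h n + d n) / h n"
      using near[of "a n + h n" n] h(1)[of n] unfolding p_def by (simp add: divide_right_mono)
    finally show ?thesis using h(1)[of n] by (simp add: add_divide_distrib)
  qed
  obtain B where B: "\<And>n. norm (M + d n / h n) \<le> B"
    using convergent_imp_bounded[OF tendsto_add[OF tendsto_const dh]] unfolding bounded_iff by auto
  have "norm (w n) \<le> B" for n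
    using w_bound[of n] abs_le_D1[OF B[of n, unfolded real_norm_def]] by linarith
  then have "bounded (range w)" unfolding bounded_iff by auto
  then obtain w0 \<sigma> where \<sigma>: "strict_mono \<sigma>" "(w \<circ> \<sigma>) \<longlonglongrightarrow> w0"
    using bounded_imp_convergent_subsequence by blast
  have "(\<lambda>n. p n - v) \<longlonglongrightarrow> 0"
  proof (rule Lim_null_comparison[OF always_eventually near0])
    show "\<forall>n. norm (p n - v) \<le> M * h n + d n" using near h(1) unfolding p_def by (simp add: less_imp_le)
  qed
  then have "p \<longlonglongrightarrow> v" by (rule LIM_zero_cancel)
  then have "v \<in> C" using C pC closed_sequentially by blast
  moreover have "w0 \<in> tangent_cone C v"
  proof (rule tangent_coneI[of "h \<circ> \<sigma>"])
    show "(h \<circ> \<sigma>) \<longlonglongrightarrow> 0" using LIMSEQ_subseq_LIMSEQ[OF h(3) \<sigma>(1)] .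
    show "v + (h \<circ> \<sigma>) i *\<^sub>R (w \<circ> \<sigma>) i \<in> C" for i
      using pC[of "\<sigma> i"] h(1)[of "\<sigma> i"] unfolding w_def by (simp add: field_simps)
  qed (use h(1) \<sigma>(2) in \<open>auto simp: o_def\<close>)
  moreover have "w0 \<in> F v"
  proof (rule average_velocity_limit_in_values[OF osc lb \<open>v \<in> C\<close> cv[OF \<open>v \<in> C\<close>]])
    show "flow_arc C F (f (\<sigma> k)) (a (\<sigma> k)) (a (\<sigma> k) + h (\<sigma> k))" for k by (rule short(3))
    show "a (\<sigma> k) < a (\<sigma> k) + h (\<sigma> k)" for k using h(1) by simp
    show "norm (f (\<sigma> k) t - v) \<le> M * h (\<sigma> k) + d (\<sigma> k)" if "t \<in> {a (\<sigma> k)..a (\<sigma> k) + h (\<sigma> k)}" for k t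
      using near that by blast
    show "(\<lambda>k. M * h (\<sigma> k) + d (\<sigma> k)) \<longlonglongrightarrow> 0" using LIMSEQ_subseq_LIMSEQ[OF near0 \<sigma>(1)] by (simp add: o_def)
    have "norm ((f n (a n) - v) /\<^sub>R h n) = d n / h n" for n
      using h(1)[of n] unfolding d_def norm_scaleR by (simp add: divide_inverse_commute)
    then have "(\<lambda>n. norm ((f n (a n) - v) /\<^sub>R h n)) \<longlonglongrightarrow> 0" using dh by simp
    then have "(\<lambda>n. (f n (a n) - v) /\<^sub>R h n) \<longlonglongrightarrow> 0" by (rule tendsto_norm_zero_cancel)
    from LIMSEQ_subseq_LIMSEQ[OF this \<sigma>(1)] \<sigma>(2)
    have "(\<lambda>k. w (\<sigma> k) - (f (\<sigma> k) (a (\<sigma> k)) - v) /\<^sub>R h (\<sigma> k)) \<longlonglongrightarrow> w0 - 0"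
      unfolding o_def by (rule tendsto_diff[rotated])
    moreover have "w n - (f n (a n) - v) /\<^sub>R h n = (p n - f n (a n)) /\<^sub>R h n" for n
      unfolding w_def by (simp add: algebra_simps)
    ultimately show "(\<lambda>k. (f (\<sigma> k) (a (\<sigma> k) + h (\<sigma> k)) - f (\<sigma> k) (a (\<sigma> k))) /\<^sub>R
        (a (\<sigma> k) + h (\<sigma> k) - a (\<sigma> k))) \<longlonglongrightarrow> w0"
      unfolding p_def by simp
  qed
  ultimately show ?thesis by blast
qed

text \<open>Transversality of \<open>F\<close> on a compact set \<open>K\<close> keeps long flow arcs from starting near \<open>K\<close>:
  otherwise a limit point of their initial points would carry a tangent velocity.\<close>

lemma flow_arcs_start_away:
  fixes F :: "'a::euclidean_space \<Rightarrow> 'a set"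
  assumes C: "closed C" and osc: "osc_rel F C" and lb: "locally_bounded_rel F C"
    and cv: "\<And>x. x \<in> C \<Longrightarrow> convex (F x)" and K: "compact K"
    and transversal: "\<And>v. v \<in> K \<Longrightarrow> v \<in> C \<Longrightarrow> F v \<inter> tangent_cone C v = {}" and "\<tau> > 0"
  obtains \<delta> where "\<delta> > 0" "\<And>f a b v. flow_arc C F f a b \<Longrightarrow> a + \<tau> \<le> b \<Longrightarrow> v \<in> K \<Longrightarrow> \<delta> \<le> norm (f a - v)"
proof -
  have "\<exists>\<delta>>0. \<forall>f a b v. flow_arc C F f a b \<and> a + \<tau> \<le> b \<and> v \<in> K \<longrightarrow> \<delta> \<le> norm (f a - v)"
  proof (rule ccontr)
    assume "\<not> ?thesis"
    then have "\<exists>f a b v. flow_arc C F f a b \<and> a + \<tau> \<le> b \<and> v \<in> K \<and> norm (f a - v) < inverse (real (Suc n))"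
      for n by (meson not_le of_nat_0_less_iff positive_imp_inverse_positive zero_less_Suc)
    then obtain f a b v where arcs: "\<And>n. flow_arc C F (f n) (a n) (b n)" "\<And>n. a n + \<tau> \<le> b n"
      and vK: "\<And>n. v n \<in> K" and close: "\<And>n. norm (f n (a n) - v n) < inverse (real (Suc n))"
      by metis
    obtain l \<sigma> where "l \<in> K" "strict_mono \<sigma>" "(v \<circ> \<sigma>) \<longlonglongrightarrow> l"
      using compact_imp_seq_compact[OF K] vK unfolding seq_compact_def by metis
    have "(\<lambda>n. f n (a n) - v n) \<longlonglongrightarrow> 0"
      by (rule Lim_null_comparison[OF always_eventually LIMSEQ_inverse_real_of_nat])
        (use close in \<open>auto intro: less_imp_le\<close>)
    from tendsto_add[OF LIMSEQ_subseq_LIMSEQ[OF this \<open>strict_mono \<sigma>\<close>] \<open>(v \<circ> \<sigma>) \<longlonglongrightarrow> l\<close>]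
    have "(\<lambda>n. f (\<sigma> n) (a (\<sigma> n))) \<longlonglongrightarrow> l" by (simp add: o_def)
    then have "l \<in> C \<and> F l \<inter> tangent_cone C l \<noteq> {}"
      using flow_arc_limit_tangent[OF C osc lb cv \<open>\<tau> > 0\<close>, of "\<lambda>n. f (\<sigma> n)" "\<lambda>n. a (\<sigma> n)"
          "\<lambda>n. b (\<sigma> n)" l] arcs by blast
    then show False using transversal \<open>l \<in> K\<close> by blast
  qed
  then show ?thesis using that by blast
qed

lemma flow_arcs_end_away:
  fixes F :: "'a::euclidean_space \<Rightarrow> 'a set"
  assumes C: "closed C" and osc: "osc_rel F C" and lb: "locally_bounded_rel F C"
    and cv: "\<And>x. x \<in> C \<Longrightarrow> convex (F x)" and K: "compact K"
    and transversal: "\<And>v. v \<in> K \<Longrightarrow> v \<in> C \<Longrightarrow> uminus ` F v \<inter> tangent_cone C v = {}" and "\<tau> > 0"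
  obtains \<delta> where "\<delta> > 0" "\<And>f a b v. flow_arc C F f a b \<Longrightarrow> a + \<tau> \<le> b \<Longrightarrow> v \<in> K \<Longrightarrow> \<delta> \<le> norm (f b - v)"
proof -
  obtain \<delta> where "\<delta> > 0"
    and away: "\<And>f a b v. flow_arc C (\<lambda>x. uminus ` F x) f a b \<Longrightarrow> a + \<tau> \<le> b \<Longrightarrow> v \<in> K \<Longrightarrow> \<delta> \<le> norm (f a - v)"
    using flow_arcs_start_away[OF C osc_rel_uminus[OF osc] locally_bounded_rel_uminus[OF lb] _ K transversal
        \<open>\<tau> > 0\<close>] cv convex_negations by metis
  have "\<delta> \<le> norm (f b - v)" if "flow_arc C F f a b" "a + \<tau> \<le> b" "v \<in> K" for f a b v
    using away[OF flow_arc_reflect[OF that(1)]] that(2,3) by simp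
  with \<open>\<delta> > 0\<close> show ?thesis by (rule that)
qed

section \<open>Hybrid time domains and solutions\<close>

lemma hybrid_time_domainE:
  assumes "hybrid_time_domain E" "(T, J) \<in> E"
  obtains tt :: "nat \<Rightarrow> real" where "tt 0 = 0" "\<And>j. j \<le> J \<Longrightarrow> tt j \<le> tt (Suc j)"
    "\<And>t j. j \<le> J \<Longrightarrow> (t, j) \<in> E \<and> 0 \<le> t \<and> t \<le> T \<longleftrightarrow> tt j \<le> t \<and> t \<le> tt (Suc j)"
proof -
  obtain tt :: "nat \<Rightarrow> real" where tt: "tt 0 = 0" "\<forall>j\<le>J. tt j \<le> tt (Suc j)"
    "E \<inter> ({0..T} \<times> {0..J}) = (\<Union>j\<in>{0..J}. {tt j..tt (Suc j)} \<times> {j})"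
    using assms unfolding hybrid_time_domain_def by blast
  show ?thesis
  proof (rule that)
    show "tt 0 = 0" "\<And>j. j \<le> J \<Longrightarrow> tt j \<le> tt (Suc j)" using tt(1,2) by simp_all
    fix t j assume "j \<le> J"
    have "(t, j) \<in> E \<inter> ({0..T} \<times> {0..J}) \<longleftrightarrow> (t, j) \<in> (\<Union>j\<in>{0..J}. {tt j..tt (Suc j)} \<times> {j})"
      using tt(3) by simp
    then show "(t, j) \<in> E \<and> 0 \<le> t \<and> t \<le> T \<longleftrightarrow> tt j \<le> t \<and> t \<le> tt (Suc j)"
      using \<open>j \<le> J\<close> by auto
  qed
qed

lemma hybrid_time_domain_nonneg: "hybrid_time_domain E \<Longrightarrow> (t, j) \<in> E \<Longrightarrow> 0 \<le> t"
  unfolding hybrid_time_domain_def by auto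

lemma mono_upto:
  fixes tt :: "nat \<Rightarrow> real"
  assumes "\<And>j. j \<le> J \<Longrightarrow> tt j \<le> tt (Suc j)" "i \<le> i'" "i' \<le> Suc J"
  shows "tt i \<le> tt i'"
  using assms(2,3)
proof (induction i')
  case (Suc k)
  then show ?case using assms(1)[of k] by (cases "i = Suc k") auto
qed simp

lemma hybrid_time_domain_last:
  assumes E: "hybrid_time_domain E" "(T, J) \<in> E" and tt: "tt 0 = 0" "\<And>j. j \<le> J \<Longrightarrow> tt j \<le> tt (Suc j)"
    and mem: "\<And>t j. j \<le> J \<Longrightarrow> (t, j) \<in> E \<and> 0 \<le> t \<and> t \<le> T \<longleftrightarrow> tt j \<le> t \<and> t \<le> tt (Suc j)"
  shows "tt (Suc J) = T"
proof -
  have "T \<le> tt (Suc J)" using mem[of J T] E hybrid_time_domain_nonneg by blast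
  moreover have "0 \<le> tt J" using mono_upto[where J=J and tt=tt, OF tt(2), of 0 J] tt(1) by simp
  then have "tt (Suc J) \<le> T" using mem[of J "tt (Suc J)"] tt(2)[of J] by auto
  ultimately show ?thesis by simp
qed

lemma hybrid_time_domain_interval:
  assumes E: "hybrid_time_domain E" and "(t1, j) \<in> E" "(t2, j) \<in> E" "t1 \<le> t" "t \<le> t2"
  shows "(t, j) \<in> E"
proof -
  obtain tt where tt: "tt 0 = 0" "\<And>i. i \<le> j \<Longrightarrow> tt i \<le> tt (Suc i)"
    and mem: "\<And>s i. i \<le> j \<Longrightarrow> (s, i) \<in> E \<and> 0 \<le> s \<and> s \<le> t2 \<longleftrightarrow> tt i \<le> s \<and> s \<le> tt (Suc i)"
    using hybrid_time_domainE[OF E \<open>(t2, j) \<in> E\<close>] by blast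
  have "tt (Suc j) = t2" using hybrid_time_domain_last[OF E \<open>(t2, j) \<in> E\<close> tt mem] .
  moreover have "tt j \<le> t1" using mem[of j t1] assms hybrid_time_domain_nonneg[OF E] by auto
  ultimately show ?thesis using mem[of j t] assms by auto
qed

lemma hybrid_time_domain_interval_start:
  assumes E: "hybrid_time_domain E" and "(t, j) \<in> E"
  obtains a where "a \<le> t" "(a, j) \<in> E" "j = 0 \<Longrightarrow> a = 0" "\<And>k. j = Suc k \<Longrightarrow> (a, k) \<in> E"
proof -
  obtain tt where tt: "tt 0 = 0" "\<And>i. i \<le> j \<Longrightarrow> tt i \<le> tt (Suc i)"
    and mem: "\<And>s i. i \<le> j \<Longrightarrow> (s, i) \<in> E \<and> 0 \<le> s \<and> s \<le> t \<longleftrightarrow> tt i \<le> s \<and> s \<le> tt (Suc i)"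
    using hybrid_time_domainE[OF E \<open>(t, j) \<in> E\<close>] by blast
  have last: "tt (Suc j) = t" using hybrid_time_domain_last[OF E \<open>(t, j) \<in> E\<close> tt mem] .
  have "0 \<le> tt j" using mono_upto[where J=j and tt=tt, OF tt(2), of 0 j] tt(1) by simp
  moreover have "tt j \<le> t" using tt(2)[of j] last by simp
  ultimately have "(tt j, j) \<in> E" using mem[of j "tt j"] last by auto
  moreover have "(tt j, k) \<in> E" if "j = Suc k" for k
    using mem[of k "tt j"] tt(2)[of k] \<open>0 \<le> tt j\<close> \<open>tt j \<le> t\<close> that by auto
  ultimately show ?thesis using that tt(1) \<open>tt j \<le> t\<close> by blast
qed

lemma hybrid_time_domain_jump_before:
  assumes E: "hybrid_time_domain E" and "(t, j') \<in> E" "j < j'"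
  obtains s where "s \<le> t" "(s, j) \<in> E" "(s, Suc j) \<in> E"
proof -
  obtain tt where tt: "tt 0 = 0" "\<And>i. i \<le> j' \<Longrightarrow> tt i \<le> tt (Suc i)"
    and mem: "\<And>s i. i \<le> j' \<Longrightarrow> (s, i) \<in> E \<and> 0 \<le> s \<and> s \<le> t \<longleftrightarrow> tt i \<le> s \<and> s \<le> tt (Suc i)"
    using hybrid_time_domainE[OF E \<open>(t, j') \<in> E\<close>] by blast
  have "tt (Suc j') = t" using hybrid_time_domain_last[OF E \<open>(t, j') \<in> E\<close> tt mem] .
  then have "0 \<le> tt (Suc j)" "tt (Suc j) \<le> t"
    using mono_upto[where J=j' and tt=tt, OF tt(2), of 0 "Suc j"] mono_upto[where J=j' and tt=tt, OF tt(2), of "Suc j" "Suc j'"] tt(1) \<open>j < j'\<close> by auto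
  then show ?thesis
    using that[of "tt (Suc j)"] mem[of j "tt (Suc j)"] mem[of "Suc j" "tt (Suc j)"] tt(2)[of j] tt(2)[of "Suc j"]
      \<open>j < j'\<close> by auto
qed

definition monotone_time_domain :: "(real \<times> nat) set \<Rightarrow> bool" where
  "monotone_time_domain E \<longleftrightarrow> (\<forall>t j t' j'. (t, j) \<in> E \<longrightarrow> (t', j') \<in> E \<longrightarrow> j < j' \<longrightarrow> t \<le> t')"

lemma hybrid_time_domain_jump_after:
  assumes E: "hybrid_time_domain E" and "t_complete E" and mono: "monotone_time_domain E"
    and "(t, j) \<in> E" and bounded: "\<And>t'. (t', j) \<in> E \<Longrightarrow> t' < B"
  obtains b where "t \<le> b" "b < B" "(b, j) \<in> E" "(b, Suc j) \<in> E"
proof -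
  obtain T J where TJ: "(T, J) \<in> E" "T > B" using \<open>t_complete E\<close> unfolding t_complete_def by blast
  have "\<not> J < j" using mono TJ \<open>(t, j) \<in> E\<close> bounded[of t] unfolding monotone_time_domain_def by force
  moreover have "J \<noteq> j" using bounded[of T] TJ by auto
  ultimately obtain b where b: "b \<le> T" "(b, j) \<in> E" "(b, Suc j) \<in> E"
    using hybrid_time_domain_jump_before[OF E TJ(1), of j] by (metis linorder_neqE_nat)
  moreover have "t \<le> b" using mono \<open>(t, j) \<in> E\<close> b(3) unfolding monotone_time_domain_def by blast
  ultimately show ?thesis using that bounded by blast
qed

lemma monotone_time_domain_index_unique:
  assumes "monotone_time_domain E" "(a, k) \<in> E" "(b, k) \<in> E" "a < t" "t < b" "(t, k') \<in> E"
  shows "k' = k"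
  using assms unfolding monotone_time_domain_def by (metis linorder_neqE_nat not_le)

lemma is_solutionD:
  assumes "is_solution C F D G E \<phi>"
  shows "hybrid_time_domain E" "(0, 0) \<in> E" "\<phi> (0, 0) \<in> C \<union> D"
    "locally_abs_continuous_on (Ij E j) (\<lambda>t. \<phi> (t, j))"
    "interior (Ij E j) \<noteq> {} \<Longrightarrow> t \<in> interior (Ij E j) \<Longrightarrow> \<phi> (t, j) \<in> C"
    "interior (Ij E j) \<noteq> {} \<Longrightarrow> \<exists>N. negligible N \<and> (\<forall>t\<in>Ij E j - N. \<exists>v.
       ((\<lambda>s. \<phi> (s, j)) has_vector_derivative v) (at t within Ij E j) \<and> v \<in> F (\<phi> (t, j)))"
    "(t, j) \<in> E \<Longrightarrow> (t, Suc j) \<in> E \<Longrightarrow> \<phi> (t, j) \<in> D"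
    "(t, j) \<in> E \<Longrightarrow> (t, Suc j) \<in> E \<Longrightarrow> \<phi> (t, Suc j) \<in> G (\<phi> (t, j))"
  using assms unfolding is_solution_def by blast+

lemma is_solution_flow_arc:
  assumes sol: "is_solution C F D G E \<phi>" and "(t1, j) \<in> E" "(t2, j) \<in> E" "t1 \<le> t2"
  shows "flow_arc C F (\<lambda>t. \<phi> (t, j)) t1 t2"
proof -
  have sub: "{t1..t2} \<subseteq> Ij E j"
    unfolding Ij_def using hybrid_time_domain_interval[OF is_solutionD(1)[OF sol] assms(2,3)] by auto
  then have ac: "abs_continuous_on_interval t1 t2 (\<lambda>t. \<phi> (t, j))"
    using is_solutionD(4)[OF sol] unfolding locally_abs_continuous_on_def by blast
  show ?thesis
  proof (cases "t1 = t2")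
    case True
    then have "\<forall>t\<in>{t1..t2} - {t1}. \<exists>v. ((\<lambda>t. \<phi> (t, j)) has_vector_derivative v) (at t within {t1..t2}) \<and>
        v \<in> F (\<phi> (t, j))" "\<forall>t\<in>{t1<..<t2}. \<phi> (t, j) \<in> C"
      by auto
    then show ?thesis unfolding flow_arc_def using ac \<open>t1 \<le> t2\<close> negligible_sing by blast
  next
    case False
    have interior: "{t1<..<t2} \<subseteq> interior (Ij E j)" using interior_mono[OF sub] by simp
    moreover have "{t1<..<t2} \<noteq> {}" using False \<open>t1 \<le> t2\<close> by simp
    ultimately have "interior (Ij E j) \<noteq> {}" by blast
    then obtain N where N: "negligible N" and deriv: "\<And>t. t \<in> Ij E j - N \<Longrightarrow> \<exists>v.
        ((\<lambda>s. \<phi> (s, j)) has_vector_derivative v) (at t within Ij E j) \<and> v \<in> F (\<phi> (t, j))"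
      using is_solutionD(6)[OF sol \<open>interior (Ij E j) \<noteq> {}\<close>] by blast
    have "\<exists>v. ((\<lambda>s. \<phi> (s, j)) has_vector_derivative v) (at t within {t1..t2}) \<and> v \<in> F (\<phi> (t, j))"
      if t: "t \<in> {t1..t2} - N" for t
    proof -
      obtain v where "((\<lambda>s. \<phi> (s, j)) has_vector_derivative v) (at t within Ij E j)" "v \<in> F (\<phi> (t, j))"
        using deriv[of t] t sub by blast
      then show ?thesis using has_vector_derivative_within_subset[OF _ sub] by blast
    qed
    moreover have "\<forall>t\<in>{t1<..<t2}. \<phi> (t, j) \<in> C"
      using is_solutionD(5)[OF sol \<open>interior (Ij E j) \<noteq> {}\<close>] interior by blast
    ultimately show ?thesis unfolding flow_arc_def using ac \<open>t1 \<le> t2\<close> N by auto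
  qed
qed

lemma is_solution_monotone_time_domain:
  assumes sol: "is_solution C F D G E \<phi>"
    and no_flow: "\<And>f a b. flow_arc C F f a b \<Longrightarrow> a < b \<Longrightarrow> f a \<in> D \<Longrightarrow> False"
  shows "monotone_time_domain E"
  unfolding monotone_time_domain_def
proof (intro allI impI)
  fix t j t' j' assume "(t, j) \<in> E" "(t', j') \<in> E" "j < j'"
  have E: "hybrid_time_domain E" using is_solutionD(1)[OF sol] .
  obtain s where s: "s \<le> t'" "(s, j) \<in> E" "(s, Suc j) \<in> E"
    using hybrid_time_domain_jump_before[OF E \<open>(t', j') \<in> E\<close> \<open>j < j'\<close>] by blast
  show "t \<le> t'"
  proof (rule ccontr)
    assume "\<not> t \<le> t'"
    then have "flow_arc C F (\<lambda>r. \<phi> (r, j)) s t" "s < t"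
      using is_solution_flow_arc[OF sol s(2) \<open>(t, j) \<in> E\<close>] s(1) by auto
    then show False using no_flow is_solutionD(7)[OF sol s(2,3)] by blast
  qed
qed

section \<open>Transversal hybrid systems\<close>

lemma rhoA_lessE:
  assumes "rhoA C D G x y < s" "setA C D G \<noteq> {}"
  obtains u v where "(u, v) \<in> setA C D G" "dist x u < s" "dist y v < s"
proof -
  have "\<exists>p\<in>setA C D G. norm ((x, y) - p) < s"
    using assms unfolding rhoA_def by (subst (asm) cINF_less_iff) (auto intro: bdd_belowI[of _ 0])
  then obtain u v where "(u, v) \<in> setA C D G" "norm ((x - u, y - v)) < s" by auto
  moreover have "norm (x - u) \<le> norm ((x - u, y - v))" "norm (y - v) \<le> norm ((x - u, y - v))"
    using norm_fst_le[of "x - u" "y - v"] norm_snd_le[of "y - v" "x - u"] by simp_all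
  ultimately show ?thesis using that[of u v] by (simp add: dist_norm)
qed

lemma osc_rel_single_valued_continuous:
  fixes G :: "'a::euclidean_space \<Rightarrow> 'b::euclidean_space set"
  assumes osc: "osc_rel G D" and lb: "locally_bounded_rel G D" and sv: "single_valued_on G D"
  shows "continuous_on D (\<lambda>x. the_elem (G x))"
  unfolding continuous_on_iff
proof (intro ballI allI impI)
  fix x e assume x: "x \<in> D" and "(e::real) > 0"
  obtain r where "r > 0" and r: "\<And>z y. z \<in> D \<Longrightarrow> dist z x < r \<Longrightarrow> y \<in> G z \<Longrightarrow> \<exists>y'\<in>G x. dist y y' < e"
    using osc_rel_upper_semicontinuous[OF osc lb x \<open>e > 0\<close>] by blast
  have "dist (the_elem (G z)) (the_elem (G x)) < e" if z: "z \<in> D" "dist z x < r" for z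
  proof -
    have "\<exists>y. G z = {y}" "\<exists>y. G x = {y}" using sv z(1) x unfolding single_valued_on_def by auto
    then obtain y y' where "G z = {y}" "G x = {y'}" by (elim exE)
    then show ?thesis using r[OF z, of y] by simp
  qed
  with \<open>r > 0\<close> show "\<exists>d>0. \<forall>z\<in>D. dist z x < d \<longrightarrow> dist (the_elem (G z)) (the_elem (G x)) < e" by blast
qed

locale transversal_hybrid_system =
  fixes C D :: "'a::euclidean_space set" and F G :: "'a \<Rightarrow> 'a set"
  assumes basic: "hybrid_basic_conditions C F D G"
    and jumps_leave_D: "set_image G D \<inter> D = {}"
    and jumps_land_in_C: "set_image G D \<subseteq> C"
    and jump_single_valued: "single_valued_on G D"
    and jump_proper: "proper_map G"
    and transversal_D: "\<forall>x\<in>C \<inter> D. F x \<inter> tangent_cone C x = {}"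
    and transversal_jump_image: "\<forall>x\<in>C \<inter> set_image G D. uminus ` F x \<inter> tangent_cone C x = {}"
begin

lemma basic_conditions:
  shows closed_C: "closed C" and closed_D: "closed D"
    and osc_F: "osc_rel F C" and bounded_F: "locally_bounded_rel F C" and convex_F: "\<And>x. x \<in> C \<Longrightarrow> convex (F x)"
    and osc_G: "osc_rel G D" and bounded_G: "locally_bounded_rel G D"
  using basic unfolding hybrid_basic_conditions_def by auto

definition jump :: "'a \<Rightarrow> 'a" where
  "jump x = the_elem (G x)"

lemma G_eq_jump: "x \<in> D \<Longrightarrow> G x = {jump x}"
  using jump_single_valued unfolding single_valued_on_def jump_def by auto

lemma jump_notin_D: "x \<in> D \<Longrightarrow> jump x \<notin> D"
  using jumps_leave_D G_eq_jump unfolding set_image_def by blast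

lemma jump_in_jump_image: "x \<in> D \<Longrightarrow> jump x \<in> C \<inter> set_image G D"
  using jumps_land_in_C G_eq_jump unfolding set_image_def by blast

lemma continuous_on_jump: "continuous_on D jump"
  unfolding jump_def by (rule osc_rel_single_valued_continuous[OF osc_G bounded_G jump_single_valued])

lemma compact_jump_sublevel: "compact {x \<in> D. norm (jump x) \<le> r}"
proof -
  have "compact {x. G x \<inter> cball 0 r \<noteq> {}}"
    using jump_proper compact_cball unfolding proper_map_def by blast
  then have "compact (D \<inter> {x. G x \<inter> cball 0 r \<noteq> {}})" using closed_D by (intro closed_Int_compact)
  moreover have "G x \<inter> cball 0 r \<noteq> {} \<longleftrightarrow> norm (jump x) \<le> r" if "x \<in> D" for x
    using G_eq_jump[OF that] by simp
  then have "D \<inter> {x. G x \<inter> cball 0 r \<noteq> {}} = {x \<in> D. norm (jump x) \<le> r}" by blast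
  ultimately show ?thesis by simp
qed

lemma speed_bound:
  obtains M where "M > 0" "\<And>z y. z \<in> C \<Longrightarrow> norm z \<le> R \<Longrightarrow> y \<in> F z \<Longrightarrow> norm y \<le> M"
  using locally_bounded_rel_cball_bound[OF bounded_F closed_C] by blast

text \<open>The set of jump targets need not be closed; properness of \<open>G\<close> makes the targets near the
  bounded set \<open>K\<close> a compact set.\<close>

lemma jump_image_separated:
  assumes K: "compact K" "K \<subseteq> D"
  obtains d where "d > 0" "\<And>a b. a \<in> K \<Longrightarrow> b \<in> D \<Longrightarrow> d \<le> dist a (jump b)"
proof -
  obtain R where R: "\<And>a. a \<in> K \<Longrightarrow> norm a \<le> R"
    using compact_imp_bounded[OF K(1)] unfolding bounded_iff by blast
  define L where "L = jump ` {x \<in> D. norm (jump x) \<le> R + 1}"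
  have "compact L"
    unfolding L_def using compact_jump_sublevel continuous_on_subset[OF continuous_on_jump]
    by (intro compact_continuous_image) auto
  moreover have "K \<inter> L = {}" unfolding L_def using K(2) jump_notin_D by blast
  ultimately obtain \<delta> where "\<delta> > 0" and \<delta>: "\<And>a y. a \<in> K \<Longrightarrow> y \<in> L \<Longrightarrow> \<delta> \<le> dist a y"
    using separate_compact_closed[OF K(1) compact_imp_closed] by metis
  have "min \<delta> 1 \<le> dist a (jump b)" if "a \<in> K" "b \<in> D" for a b
  proof (rule ccontr)
    assume "\<not> ?thesis"
    then have "dist a (jump b) < 1" "dist a (jump b) < \<delta>" by auto
    moreover have "norm (jump b) \<le> R + 1"
      using R[OF that(1)] norm_triangle_ineq2[of "jump b" a] \<open>dist a (jump b) < 1\<close>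
      by (simp add: dist_norm norm_minus_commute)
    ultimately show False using \<delta>[OF that(1)] that(2) unfolding L_def by fastforce
  qed
  then show ?thesis using that[of "min \<delta> 1"] \<open>\<delta> > 0\<close> by simp
qed

lemma no_flow_from_D:
  assumes "flow_arc C F f a b" "a < b" "f a \<in> D"
  shows False
proof -
  obtain \<delta> where "\<delta> > 0" "\<And>g a' b' v. flow_arc C F g a' b' \<Longrightarrow> a' + (b - a) \<le> b' \<Longrightarrow> v \<in> {f a} \<Longrightarrow>
      \<delta> \<le> norm (g a' - v)"
    using flow_arcs_start_away[OF closed_C osc_F bounded_F convex_F, of "{f a}" "b - a"]
      transversal_D assms(2,3) by auto
  then show False using assms(1) by fastforce
qed

lemma solution_monotone: "is_solution C F D G E \<phi> \<Longrightarrow> monotone_time_domain E"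
  by (erule is_solution_monotone_time_domain) (metis no_flow_from_D)

lemma solution_jump:
  assumes "is_solution C F D G E \<phi>" "(t, j) \<in> E" "(t, Suc j) \<in> E"
  shows "\<phi> (t, j) \<in> D" "\<phi> (t, Suc j) = jump (\<phi> (t, j))"
  using is_solutionD(7,8)[OF assms] G_eq_jump by auto


lemma jump_soon_near_D:
  assumes K: "compact K" "K \<subseteq> D" and "\<epsilon> > 0"
  obtains s where "s > 0"
    "\<And>E \<phi> t j v. is_solution C F D G E \<phi> \<Longrightarrow> t_complete E \<Longrightarrow> (t, j) \<in> E \<Longrightarrow> v \<in> K \<Longrightarrow>
       norm (\<phi> (t, j) - v) < s \<Longrightarrow> \<exists>b. t \<le> b \<and> b < t + \<epsilon> \<and> (b, Suc j) \<in> E \<and> dist (\<phi> (b, Suc j)) (jump v) < \<epsilon>"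
proof -
  obtain R where R: "\<And>v. v \<in> K \<Longrightarrow> norm v \<le> R"
    using compact_imp_bounded[OF K(1)] unfolding bounded_iff by blast
  define Kb where "Kb = D \<inter> cball 0 (R + 2)"
  have "compact Kb" unfolding Kb_def using closed_D by (intro closed_Int_compact) auto
  then have "uniformly_continuous_on Kb jump"
    using continuous_on_subset[OF continuous_on_jump] unfolding Kb_def
    by (intro compact_uniformly_continuous) auto
  then obtain \<rho> where "\<rho> > 0"
    and \<rho>: "\<And>w w'. w \<in> Kb \<Longrightarrow> w' \<in> Kb \<Longrightarrow> dist w' w < \<rho> \<Longrightarrow> dist (jump w') (jump w) < \<epsilon>"
    unfolding uniformly_continuous_on_def using \<open>\<epsilon> > 0\<close> by metis
  obtain M where "M > 0" and speed: "\<And>z y. z \<in> C \<Longrightarrow> norm z \<le> (R + 1) + 1 \<Longrightarrow> y \<in> F z \<Longrightarrow> norm y \<le> M"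
    using speed_bound by blast
  define \<tau> where "\<tau> = min \<epsilon> (min (1 / (2 * M)) (\<rho> / (2 * M)))"
  have "\<tau> > 0" "\<tau> \<le> \<epsilon>" using \<open>\<epsilon> > 0\<close> \<open>M > 0\<close> \<open>\<rho> > 0\<close> unfolding \<tau>_def by auto
  have "M * \<tau> \<le> M * (1 / (2 * M))" using \<open>M > 0\<close> unfolding \<tau>_def by (intro mult_left_mono) auto
  moreover have "M * \<tau> \<le> M * (\<rho> / (2 * M))" using \<open>M > 0\<close> unfolding \<tau>_def by (intro mult_left_mono) auto
  ultimately have M\<tau>: "M * \<tau> \<le> 1 / 2" "M * \<tau> \<le> \<rho> / 2" using \<open>M > 0\<close> by simp_all
  obtain \<delta> where "\<delta> > 0" and away: "\<And>f a b v. flow_arc C F f a b \<Longrightarrow> a + \<tau> \<le> b \<Longrightarrow> v \<in> K \<Longrightarrow> \<delta> \<le> norm (f a - v)"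
    using flow_arcs_start_away[OF closed_C osc_F bounded_F convex_F K(1) _ \<open>\<tau> > 0\<close>] transversal_D K(2)
    by blast
  define s where "s = min \<delta> (min (\<rho> / 2) (1 / 2))"
  have "s > 0" using \<open>\<delta> > 0\<close> \<open>\<rho> > 0\<close> unfolding s_def by simp
  have "\<exists>b. t \<le> b \<and> b < t + \<epsilon> \<and> (b, Suc j) \<in> E \<and> dist (\<phi> (b, Suc j)) (jump v) < \<epsilon>"
    if sol: "is_solution C F D G E \<phi>" "t_complete E" "(t, j) \<in> E" "v \<in> K" "norm (\<phi> (t, j) - v) < s"
    for E \<phi> t j v
  proof -
    have E: "hybrid_time_domain E" using is_solutionD(1)[OF sol(1)] .
    have "t' < t + \<tau>" if "(t', j) \<in> E" for t'
    proof (rule ccontr)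
      assume "\<not> t' < t + \<tau>"
      then have "(t + \<tau>, j) \<in> E" using hybrid_time_domain_interval[OF E sol(3) that] \<open>\<tau> > 0\<close> by simp
      then have "flow_arc C F (\<lambda>r. \<phi> (r, j)) t (t + \<tau>)"
        using is_solution_flow_arc[OF sol(1) sol(3)] \<open>\<tau> > 0\<close> by simp
      from away[OF this order_refl sol(4)] have "\<delta> \<le> norm (\<phi> (t, j) - v)" by simp
      then show False using sol(5) unfolding s_def by simp
    qed
    then obtain b where b: "t \<le> b" "b < t + \<tau>" "(b, j) \<in> E" "(b, Suc j) \<in> E"
      using hybrid_time_domain_jump_after[OF E sol(2) solution_monotone[OF sol(1)] sol(3)] by blast
    have "norm (\<phi> (t, j)) \<le> R + 1"
      using R[OF sol(4)] sol(5) norm_triangle_ineq2[of "\<phi> (t, j)" v] unfolding s_def by linarith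
    moreover have "M * (b - t) \<le> M * \<tau>" using b \<open>M > 0\<close> by simp
    ultimately have "norm (\<phi> (b, j) - \<phi> (t, j)) \<le> M * \<tau>"
      using flow_arc_escape_forward[OF speed \<open>M > 0\<close> is_solution_flow_arc[OF sol(1) sol(3) b(3,1)]] M\<tau>
      by fastforce
    then have "dist (\<phi> (b, j)) v < \<rho>" "norm (\<phi> (b, j)) \<le> R + 2"
      using M\<tau> sol(5) R[OF sol(4)] norm_triangle_ineq[of "\<phi> (b, j) - \<phi> (t, j)" "\<phi> (t, j) - v"]
        norm_triangle_ineq2[of "\<phi> (b, j)" v] unfolding s_def dist_norm by auto
    moreover have "\<phi> (b, j) \<in> D" "\<phi> (b, Suc j) = jump (\<phi> (b, j))" using solution_jump[OF sol(1) b(3,4)] by auto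
    moreover have "v \<in> Kb" using R[OF sol(4)] K(2) sol(4) unfolding Kb_def by auto
    ultimately have "dist (\<phi> (b, Suc j)) (jump v) < \<epsilon>" using \<rho>[of v "\<phi> (b, j)"] unfolding Kb_def by simp
    then show ?thesis using b \<open>\<tau> \<le> \<epsilon>\<close> by (intro exI[of _ b]) auto
  qed
  with \<open>s > 0\<close> show ?thesis by (rule that)
qed

text \<open>Near a compact subset of \<open>D\<close> a solution has been flowing for a uniform time: right after
  a jump it sits in the jump image, which is uniformly separated from that set.\<close>

lemma flowing_near_D:
  assumes K: "compact K" "K \<subseteq> D"
  obtains \<tau> d where "\<tau> > 0" "d > 0"
    "\<And>E \<phi> t j u. is_solution C F D G E \<phi> \<Longrightarrow> (t, j) \<in> E \<Longrightarrow> u \<in> K \<Longrightarrow> norm (\<phi> (t, j) - u) < d \<Longrightarrow>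
       (j = 0 \<or> \<tau> \<le> t) \<and> (\<forall>t'. t - \<tau> \<le> t' \<and> 0 \<le> t' \<and> t' \<le> t \<longrightarrow> (t', j) \<in> E)"
proof -
  obtain d2 where "d2 > 0" and sep: "\<And>a b. a \<in> K \<Longrightarrow> b \<in> D \<Longrightarrow> d2 \<le> dist a (jump b)"
    using jump_image_separated[OF K] by blast
  obtain R where R: "\<And>v. v \<in> K \<Longrightarrow> norm v \<le> R"
    using compact_imp_bounded[OF K(1)] unfolding bounded_iff by blast
  obtain M where "M > 0" and speed: "\<And>z y. z \<in> C \<Longrightarrow> norm z \<le> (R + 1) + 1 \<Longrightarrow> y \<in> F z \<Longrightarrow> norm y \<le> M"
    using speed_bound by blast
  define \<tau> where "\<tau> = min (1 / (2 * M)) (d2 / (2 * M))"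
  have "\<tau> > 0" using \<open>M > 0\<close> \<open>d2 > 0\<close> unfolding \<tau>_def by simp
  have "M * \<tau> \<le> M * (1 / (2 * M))" using \<open>M > 0\<close> unfolding \<tau>_def by (intro mult_left_mono) auto
  moreover have "M * \<tau> \<le> M * (d2 / (2 * M))" using \<open>M > 0\<close> unfolding \<tau>_def by (intro mult_left_mono) auto
  ultimately have M\<tau>: "M * \<tau> \<le> 1 / 2" "M * \<tau> \<le> d2 / 2" using \<open>M > 0\<close> by simp_all
  define d where "d = min (d2 / 2) 1"
  have "d > 0" using \<open>d2 > 0\<close> unfolding d_def by simp
  have "(j = 0 \<or> \<tau> \<le> t) \<and> (\<forall>t'. t - \<tau> \<le> t' \<and> 0 \<le> t' \<and> t' \<le> t \<longrightarrow> (t', j) \<in> E)"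
    if sol: "is_solution C F D G E \<phi>" "(t, j) \<in> E" "u \<in> K" "norm (\<phi> (t, j) - u) < d" for E \<phi> t j u
  proof -
    have E: "hybrid_time_domain E" using is_solutionD(1)[OF sol(1)] .
    show ?thesis
    proof (cases j)
      case 0
      then show ?thesis using hybrid_time_domain_interval[OF E is_solutionD(2)[OF sol(1)]] sol(2) by auto
    next
      case (Suc k)
      obtain a where a: "a \<le> t" "(a, j) \<in> E" "(a, k) \<in> E"
        using hybrid_time_domain_interval_start[OF E sol(2)] Suc by metis
      have "\<tau> \<le> t - a"
      proof (rule ccontr)
        assume "\<not> \<tau> \<le> t - a"
        then have "M * (t - a) \<le> M * \<tau>" using \<open>M > 0\<close> by simp
        moreover have "norm (\<phi> (t, j)) \<le> R + 1"
          using R[OF sol(3)] sol(4) norm_triangle_ineq2[of "\<phi> (t, j)" u] unfolding d_def by linarith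
        ultimately have "norm (\<phi> (t, j) - \<phi> (a, j)) \<le> d2 / 2"
          using flow_arc_escape_backward[OF speed \<open>M > 0\<close> is_solution_flow_arc[OF sol(1) a(2) sol(2) a(1)]] M\<tau>
          by fastforce
        moreover have "\<phi> (a, k) \<in> D" "\<phi> (a, j) = jump (\<phi> (a, k))" using solution_jump[OF sol(1) a(3)] a(2) Suc by auto
        ultimately have "dist u (jump (\<phi> (a, k))) < d2"
          using sol(4) norm_triangle_ineq[of "u - \<phi> (t, j)" "\<phi> (t, j) - \<phi> (a, j)"] unfolding d_def dist_norm
          by (simp add: norm_minus_commute)
        then show False using sep[OF sol(3) \<open>\<phi> (a, k) \<in> D\<close>] by simp
      qed
      moreover have "0 \<le> a" using hybrid_time_domain_nonneg[OF E a(2)] .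
      ultimately show ?thesis using hybrid_time_domain_interval[OF E a(2) sol(2)] by auto
    qed
  qed
  with \<open>\<tau> > 0\<close> \<open>d > 0\<close> show ?thesis by (rule that)
qed

lemma recent_jump_near_jump_image:
  assumes K: "compact K" "K \<subseteq> D" and "\<tau> > 0"
  obtains \<delta> where "\<delta> > 0"
    "\<And>E \<phi> t j u. is_solution C F D G E \<phi> \<Longrightarrow> (t, j) \<in> E \<Longrightarrow> \<tau> \<le> t \<Longrightarrow> u \<in> K \<Longrightarrow>
       norm (\<phi> (t, j) - jump u) < \<delta> \<Longrightarrow> \<exists>a k. t - \<tau> < a \<and> a \<le> t \<and> j = Suc k \<and> (a, k) \<in> E \<and> (a, j) \<in> E"
proof -
  have "compact (jump ` K)"
    using K continuous_on_subset[OF continuous_on_jump] by (intro compact_continuous_image) auto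
  moreover have "uminus ` F v \<inter> tangent_cone C v = {}" if "v \<in> jump ` K" for v
    using that K(2) jump_in_jump_image transversal_jump_image by blast
  ultimately obtain \<delta> where "\<delta> > 0"
    and away: "\<And>f a b v. flow_arc C F f a b \<Longrightarrow> a + \<tau> \<le> b \<Longrightarrow> v \<in> jump ` K \<Longrightarrow> \<delta> \<le> norm (f b - v)"
    using flow_arcs_end_away[OF closed_C osc_F bounded_F convex_F _ _ \<open>\<tau> > 0\<close>] by metis
  have "\<exists>a k. t - \<tau> < a \<and> a \<le> t \<and> j = Suc k \<and> (a, k) \<in> E \<and> (a, j) \<in> E"
    if sol: "is_solution C F D G E \<phi>" "(t, j) \<in> E" "\<tau> \<le> t" "u \<in> K" "norm (\<phi> (t, j) - jump u) < \<delta>"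
    for E \<phi> t j u
  proof -
    obtain a where a: "a \<le> t" "(a, j) \<in> E" "j = 0 \<Longrightarrow> a = 0" "\<And>k. j = Suc k \<Longrightarrow> (a, k) \<in> E"
      using hybrid_time_domain_interval_start[OF is_solutionD(1)[OF sol(1)] sol(2)] by blast
    have "t - \<tau> < a"
    proof (rule ccontr)
      assume "\<not> t - \<tau> < a"
      then have "a + \<tau> \<le> t" by simp
      from away[OF is_solution_flow_arc[OF sol(1) a(2) sol(2) a(1)] this] sol(4)
      have "\<delta> \<le> norm (\<phi> (t, j) - jump u)" by simp
      with sol(5) show False by simp
    qed
    moreover from this have "j \<noteq> 0" using a(3) sol(3) by auto
    ultimately show ?thesis using a by (metis not0_implies_Suc)
  qed
  with \<open>\<delta> > 0\<close> show ?thesis by (rule that)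
qed

lemma flow_before_jump:
  assumes sol: "is_solution C F D G E \<phi>" and jump: "(a, k) \<in> E" "(a, Suc k) \<in> E" and "0 < a"
  obtains a' where "a' < a" "(a', k) \<in> E"
proof -
  obtain a' where a': "a' \<le> a" "(a', k) \<in> E" "k = 0 \<Longrightarrow> a' = 0" "\<And>i. k = Suc i \<Longrightarrow> (a', i) \<in> E"
    using hybrid_time_domain_interval_start[OF is_solutionD(1)[OF sol] jump(1)] by blast
  have "a' \<noteq> a"
  proof
    assume "a' = a"
    show False
    proof (cases k)
      case 0
      then show False using a'(3) \<open>a' = a\<close> \<open>0 < a\<close> by simp
    next
      case (Suc i)
      then have "\<phi> (a, i) \<in> D" "\<phi> (a, k) = jump (\<phi> (a, i))"
        using solution_jump[OF sol, of a i] a'(4) \<open>a' = a\<close> jump(1) by auto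
      then show False using solution_jump(1)[OF sol jump] jump_notin_D by simp
    qed
  qed
  then show ?thesis using a'(1,2) by (intro that[of a']) auto
qed

lemma setA_cases:
  assumes "(u, v) \<in> setA C D G"
  obtains "u = v" | "v \<in> D" "u = jump v" | "u \<in> D" "v = jump u"
  using assms G_eq_jump unfolding setA_def by auto

text \<open>Close to \<open>D\<close>, where jumps cannot be mimicked, \<open>\<rho>\<^sub>\<A>\<close> controls the ordinary distance.\<close>

lemma dist_less_if_rhoA_less_near_D:
  assumes sep: "\<And>a b. a \<in> K \<Longrightarrow> b \<in> D \<Longrightarrow> d \<le> dist a (jump b)"
    and "u \<in> K" "w \<in> K" "dist p u + s \<le> d" "dist q w + s \<le> d"
    and "rhoA C D G p q < s" "setA C D G \<noteq> {}"
  shows "dist p q < 2 * s"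
proof -
  obtain u' v' where uv: "(u', v') \<in> setA C D G" "dist p u' < s" "dist q v' < s"
    using rhoA_lessE[OF assms(6,7)] by blast
  from uv(1) show ?thesis
  proof (cases rule: setA_cases)
    case 1
    then show ?thesis using uv(2,3) dist_triangle[of p q u'] by (simp add: dist_commute)
  next
    case 2
    then have "dist u (jump v') < d" using uv(2) \<open>dist p u + s \<le> d\<close> dist_triangle[of u "jump v'" p]
      by (simp add: dist_commute)
    then show ?thesis using sep[OF \<open>u \<in> K\<close> \<open>v' \<in> D\<close>] by simp
  next
    case 3
    then have "dist w (jump u') < d" using uv(3) \<open>dist q w + s \<le> d\<close> dist_triangle[of w "jump u'" q]
      by (simp add: dist_commute)
    then show ?thesis using sep[OF \<open>w \<in> K\<close> \<open>u' \<in> D\<close>] by simp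
  qed
qed

end

section \<open>Tracking a reference solution\<close>

locale reference_solution = transversal_hybrid_system +
  fixes Es :: "(real \<times> nat) set" and \<phi>s :: "real \<times> nat \<Rightarrow> 'a"
  assumes reference: "is_solution C F D G Es \<phi>s"
begin

lemma setA_nonempty: "setA C D G \<noteq> {}"
  using is_solutionD(3)[OF reference] unfolding setA_def by auto

definition tracks :: "real \<Rightarrow> (real \<times> nat) set \<Rightarrow> (real \<times> nat \<Rightarrow> 'a) \<Rightarrow> bool" where
  "tracks s E \<phi> \<longleftrightarrow> norm (\<phi>s (0, 0) - \<phi> (0, 0)) < s \<and>
     (\<forall>(t, j)\<in>Es. \<exists>j'. (t, j') \<in> E \<and> rhoA C D G (\<phi>s (t, j)) (\<phi> (t, j')) < s)"

lemma compact_D_near_reference: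
  assumes "bounded D \<or> bounded_solution Es \<phi>s"
  obtains K where "compact K" "K \<subseteq> D"
    "\<And>t j v. (t, j) \<in> Es \<Longrightarrow> v \<in> D \<Longrightarrow> norm (\<phi>s (t, j) - v) < 1 \<Longrightarrow> v \<in> K"
    "\<And>t j v. (t, j) \<in> Es \<Longrightarrow> v \<in> D \<Longrightarrow> norm (\<phi>s (t, j) - jump v) < 1 \<Longrightarrow> v \<in> K"
proof (cases "bounded D")
  case True
  then show ?thesis using that[of D] closed_D compact_eq_bounded_closed by blast
next
  case False
  then obtain R where R: "\<And>p. p \<in> Es \<Longrightarrow> norm (\<phi>s p) \<le> R"
    using assms unfolding bounded_solution_def by blast
  define K where "K = D \<inter> cball 0 (R + 1) \<union> {x \<in> D. norm (jump x) \<le> R + 1}"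
  have "compact K" unfolding K_def using closed_D compact_jump_sublevel by (intro compact_Un closed_Int_compact) auto
  moreover have "v \<in> K" if "(t, j) \<in> Es" "v \<in> D" "norm (\<phi>s (t, j) - v) < 1" for t j v
    using R[OF that(1)] that(2,3) norm_triangle_ineq2[of v "\<phi>s (t, j)"] unfolding K_def
    by (simp add: norm_minus_commute)
  moreover have "v \<in> K" if "(t, j) \<in> Es" "v \<in> D" "norm (\<phi>s (t, j) - jump v) < 1" for t j v
    using R[OF that(1)] that(2,3) norm_triangle_ineq2[of "jump v" "\<phi>s (t, j)"] unfolding K_def
    by (simp add: norm_minus_commute)
  ultimately show ?thesis using that unfolding K_def by blast
qed

text \<open>If the reference solution is near \<open>u \<in> D\<close> while the tracking solution is near \<open>jump u\<close>,
  then the tracking solution has just jumped, from a point near \<open>D\<close>.  Shortly before its jump both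
  solutions are near \<open>D\<close>, where \<open>\<rho>\<^sub>\<A>\<close> measures the ordinary distance.\<close>

lemma tracking_near_jump_image:
  assumes K: "compact K" "K \<subseteq> D" and "\<epsilon> > 0"
  obtains s where "s > 0"
    "\<And>E \<phi> t j j' u. is_solution C F D G E \<phi> \<Longrightarrow> tracks s E \<phi> \<Longrightarrow> (t, j) \<in> Es \<Longrightarrow> (t, j') \<in> E \<Longrightarrow>
       u \<in> K \<Longrightarrow> norm (\<phi>s (t, j) - u) < s \<Longrightarrow> norm (\<phi> (t, j') - jump u) < s \<Longrightarrow>
       \<exists>t' j''. (t', j'') \<in> E \<and> \<bar>t - t'\<bar> < \<epsilon> \<and> norm (\<phi>s (t, j) - \<phi> (t', j'')) < \<epsilon>"
proof -
  obtain R1 where R1: "\<And>u. u \<in> K \<Longrightarrow> norm (jump u) \<le> R1"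
    using compact_imp_bounded[OF compact_continuous_image[OF continuous_on_subset[OF continuous_on_jump K(2)] K(1)]]
    unfolding bounded_iff by auto
  define K' where "K' = K \<union> {x \<in> D. norm (jump x) \<le> R1 + 1}"
  have K': "compact K'" "K' \<subseteq> D" unfolding K'_def using K compact_jump_sublevel by auto
  obtain R where R: "\<And>x. x \<in> K' \<Longrightarrow> norm x \<le> R" and "R1 \<le> R"
    using compact_imp_bounded[OF K'(1)] unfolding bounded_iff by (metis max.cobounded1 max.cobounded2 order_trans)
  obtain d where "d > 0" and sep: "\<And>a b. a \<in> K' \<Longrightarrow> b \<in> D \<Longrightarrow> d \<le> dist a (jump b)"
    using jump_image_separated[OF K'] by blast
  obtain \<tau>L dL where "\<tau>L > 0" "dL > 0" and flowing: "\<And>E \<phi> t j u. is_solution C F D G E \<phi> \<Longrightarrow> (t, j) \<in> E \<Longrightarrow>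
      u \<in> K \<Longrightarrow> norm (\<phi> (t, j) - u) < dL \<Longrightarrow>
      (j = 0 \<or> \<tau>L \<le> t) \<and> (\<forall>t'. t - \<tau>L \<le> t' \<and> 0 \<le> t' \<and> t' \<le> t \<longrightarrow> (t', j) \<in> E)"
    using flowing_near_D[OF K] by blast
  obtain M where "M > 0" and speed: "\<And>z y. z \<in> C \<Longrightarrow> norm z \<le> (R + 1) + 1 \<Longrightarrow> y \<in> F z \<Longrightarrow> norm y \<le> M"
    using speed_bound by blast
  define \<tau> where "\<tau> = min (min (\<tau>L / 2) (\<epsilon> / 2)) (min (\<epsilon> / 8) (min (d / 8) (1 / 4)) / M)"
  have "\<tau> > 0" "\<tau> \<le> \<tau>L / 2" "\<tau> \<le> \<epsilon> / 2"
    using \<open>\<tau>L > 0\<close> \<open>\<epsilon> > 0\<close> \<open>d > 0\<close> \<open>M > 0\<close> unfolding \<tau>_def by auto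
  have "M * \<tau> \<le> M * (min (\<epsilon> / 8) (min (d / 8) (1 / 4)) / M)"
    using \<open>M > 0\<close> unfolding \<tau>_def by (intro mult_left_mono) auto
  then have M\<tau>: "M * \<tau> \<le> \<epsilon> / 8" "M * \<tau> \<le> d / 8" "M * \<tau> \<le> 1 / 4" using \<open>M > 0\<close> by auto
  obtain \<delta> where "\<delta> > 0" and recent: "\<And>E \<phi> t j u. is_solution C F D G E \<phi> \<Longrightarrow> (t, j) \<in> E \<Longrightarrow> \<tau> \<le> t \<Longrightarrow>
      u \<in> K \<Longrightarrow> norm (\<phi> (t, j) - jump u) < \<delta> \<Longrightarrow> \<exists>a k. t - \<tau> < a \<and> a \<le> t \<and> j = Suc k \<and> (a, k) \<in> E \<and> (a, j) \<in> E"
    using recent_jump_near_jump_image[OF K \<open>\<tau> > 0\<close>] by blast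
  define s where "s = min (min (\<epsilon> / 4) (d / 8)) (min \<delta> (min dL (1 / 2)))"
  have "s > 0" using \<open>\<epsilon> > 0\<close> \<open>d > 0\<close> \<open>\<delta> > 0\<close> \<open>dL > 0\<close> unfolding s_def by simp
  have s: "s \<le> \<epsilon> / 4" "s \<le> d / 8" "s \<le> \<delta>" "s \<le> dL" "s \<le> 1 / 2" unfolding s_def by auto
  have escape: "norm (f b - f a) \<le> M * (b - a)"
    if "flow_arc C F f a b" "norm (f b) \<le> R + 1" "b - a \<le> 2 * \<tau>" for f a b
  proof (rule flow_arc_escape_backward[OF speed \<open>M > 0\<close> that(1,2)])
    have "M * (b - a) \<le> M * (2 * \<tau>)" using that(3) \<open>M > 0\<close> by simp
    then show "M * (b - a) < 1" using M\<tau> by simp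
  qed
  have "\<exists>t' j''. (t', j'') \<in> E \<and> \<bar>t - t'\<bar> < \<epsilon> \<and> norm (\<phi>s (t, j) - \<phi> (t', j'')) < \<epsilon>"
    if sol: "is_solution C F D G E \<phi>" and tracks: "tracks s E \<phi>" and tj: "(t, j) \<in> Es" "(t, j') \<in> E"
      and u: "u \<in> K" "norm (\<phi>s (t, j) - u) < s" "norm (\<phi> (t, j') - jump u) < s"
    for E \<phi> t j j' u
  proof -
    have Es: "hybrid_time_domain Es" and E: "hybrid_time_domain E"
      using is_solutionD(1) sol reference by blast+
    have x: "norm (\<phi>s (t, j)) \<le> R + 1"
      using R[of u] u K'_def norm_triangle_ineq2[of "\<phi>s (t, j)" u] unfolding s_def by auto
    have "0 \<le> t" using hybrid_time_domain_nonneg[OF Es tj(1)] .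
    have start: "j = 0 \<or> \<tau>L \<le> t" and before: "\<And>t'. t - \<tau>L \<le> t' \<Longrightarrow> 0 \<le> t' \<Longrightarrow> t' \<le> t \<Longrightarrow> (t', j) \<in> Es"
      using flowing[OF reference tj(1) u(1)] u(2) s by auto
    show ?thesis
    proof (cases "t < \<tau>")
      case True
      then have "j = 0" using start \<open>\<tau> \<le> \<tau>L / 2\<close> \<open>\<tau>L > 0\<close> by auto
      have "norm (\<phi>s (t, j) - \<phi>s (0, j)) \<le> M * (t - 0)"
        using escape[OF is_solution_flow_arc[OF reference _ tj(1) \<open>0 \<le> t\<close>] x] is_solutionD(2)[OF reference]
          \<open>j = 0\<close> True \<open>\<tau> > 0\<close> by simp
      also have "\<dots> \<le> M * \<tau>" using True \<open>M > 0\<close> by simp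
      finally have "norm (\<phi>s (t, j) - \<phi>s (0, 0)) \<le> M * \<tau>" using \<open>j = 0\<close> by simp
      moreover have "norm (\<phi>s (0, 0) - \<phi> (0, 0)) < \<epsilon> / 4"
        using tracks unfolding tracks_def s_def by simp
      ultimately have "norm (\<phi>s (t, j) - \<phi> (0, 0)) < \<epsilon>"
        using norm_diff_triangle_le[where x="\<phi>s (t, j)" and y="\<phi>s (0, 0)" and z="\<phi> (0, 0)", OF order_refl order_refl]
          M\<tau>(1) \<open>\<epsilon> > 0\<close> by linarith
      moreover have "\<bar>t - 0\<bar> < \<epsilon>" using True \<open>0 \<le> t\<close> \<open>\<tau> \<le> \<epsilon> / 2\<close> \<open>\<epsilon> > 0\<close> by simp
      ultimately show ?thesis using is_solutionD(2)[OF sol] by blast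
    next
      case False
      obtain a k where a: "t - \<tau> < a" "a \<le> t" "j' = Suc k" "(a, k) \<in> E" "(a, j') \<in> E"
        using recent[OF sol tj(2) _ u(1)] False u(3) unfolding s_def by force
      define w where "w = \<phi> (a, k)"
      have "w \<in> D" "\<phi> (a, j') = jump w" using solution_jump[OF sol a(4)] a(3,5) unfolding w_def by auto
      have "norm (\<phi> (t, j')) \<le> R1 + s"
        using R1[OF u(1)] u(3) norm_triangle_ineq2[of "\<phi> (t, j')" "jump u"] by simp
      then have "norm (\<phi> (t, j') - jump w) \<le> M * (t - a)"
        using escape[OF is_solution_flow_arc[OF sol a(5) tj(2) a(2)]] \<open>\<phi> (a, j') = jump w\<close> a(1)
          \<open>R1 \<le> R\<close> \<open>\<tau> > 0\<close> unfolding s_def by auto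
      also have "\<dots> \<le> M * \<tau>" using a(1) \<open>M > 0\<close> by simp
      finally have "norm (jump w) \<le> R1 + 1"
        using \<open>norm (\<phi> (t, j')) \<le> R1 + s\<close> M\<tau> norm_triangle_ineq2[of "jump w" "\<phi> (t, j')"]
        unfolding s_def by (simp add: norm_minus_commute)
      then have "w \<in> K'" unfolding K'_def using \<open>w \<in> D\<close> by simp
      have "0 < a" "(a, Suc k) \<in> E" using a(1,3,5) False by auto
      then obtain a0 where a0: "a0 < a" "(a0, k) \<in> E"
        using flow_before_jump[OF sol a(4)] by blast
      define m where "m = min (a - a0) \<tau>"
      have "0 < m" "m \<le> a - a0" "m \<le> \<tau>" using a0(1) \<open>\<tau> > 0\<close> unfolding m_def by auto
      define t' where "t' = a - m / 2"
      have t': "a0 < t'" "t' < a" "a - t' \<le> \<tau> / 2" "t - t' < 2 * \<tau>"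
        using \<open>0 < m\<close> \<open>m \<le> a - a0\<close> \<open>m \<le> \<tau>\<close> a(1) unfolding t'_def by auto
      have "(t', k) \<in> E" using hybrid_time_domain_interval[OF E a0(2) a(4)] t' by simp
      have "norm (w - \<phi> (t', k)) \<le> M * (a - t')"
        using escape[OF is_solution_flow_arc[OF sol \<open>(t', k) \<in> E\<close> a(4)]] R[OF \<open>w \<in> K'\<close>] t'
          \<open>\<tau> > 0\<close> unfolding w_def by auto
      also have "\<dots> \<le> M * \<tau>" using t' \<open>M > 0\<close> \<open>\<tau> > 0\<close> by simp
      finally have near_w: "dist (\<phi> (t', k)) w \<le> M * \<tau>" by (simp add: dist_norm norm_minus_commute)
      have "0 \<le> a0" using hybrid_time_domain_nonneg[OF E a0(2)] .
      have "(t', j) \<in> Es" using before t' a(2) \<open>0 \<le> a0\<close> \<open>\<tau> \<le> \<tau>L / 2\<close> by auto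
      have "norm (\<phi>s (t, j) - \<phi>s (t', j)) \<le> M * (t - t')"
        using escape[OF is_solution_flow_arc[OF reference \<open>(t', j) \<in> Es\<close> tj(1)] x] t' a(2) by simp
      also have "\<dots> \<le> 2 * (M * \<tau>)" using t' \<open>M > 0\<close> by simp
      finally have near_x: "dist (\<phi>s (t', j)) (\<phi>s (t, j)) \<le> 2 * (M * \<tau>)" by (simp add: dist_norm norm_minus_commute)
      obtain k3 where k3: "(t', k3) \<in> E" "rhoA C D G (\<phi>s (t', j)) (\<phi> (t', k3)) < s"
        using tracks \<open>(t', j) \<in> Es\<close> unfolding tracks_def by blast
      have "k3 = k"
        using monotone_time_domain_index_unique[OF solution_monotone[OF sol] a0(2) a(4) t'(1,2) k3(1)] .
      have "dist (\<phi>s (t', j)) u + s \<le> d"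
        using near_x u(2) M\<tau> s dist_triangle[of "\<phi>s (t', j)" u "\<phi>s (t, j)"] \<open>d > 0\<close>
        unfolding dist_norm by linarith
      moreover have "dist (\<phi> (t', k)) w + s \<le> d" using near_w M\<tau> s \<open>d > 0\<close> by linarith
      ultimately have "dist (\<phi>s (t', j)) (\<phi> (t', k)) < 2 * s"
        using dist_less_if_rhoA_less_near_D[OF sep, where u=u and w=w] u(1) \<open>w \<in> K'\<close> k3(2) setA_nonempty
        unfolding \<open>k3 = k\<close> K'_def by blast
      moreover have "dist (\<phi>s (t, j)) (\<phi>s (t', j)) \<le> 2 * (M * \<tau>)" using near_x by (simp add: dist_commute)
      ultimately have "dist (\<phi>s (t, j)) (\<phi> (t', k)) < \<epsilon>"
        using M\<tau> s \<open>\<epsilon> > 0\<close> dist_triangle[of "\<phi>s (t, j)" "\<phi> (t', k)" "\<phi>s (t', j)"] by linarith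
      then have "norm (\<phi>s (t, j) - \<phi> (t', k)) < \<epsilon>" by (simp add: dist_norm)
      moreover have "\<bar>t - t'\<bar> < \<epsilon>" using t' a(2) \<open>\<tau> \<le> \<epsilon> / 2\<close> by simp
      ultimately show ?thesis using \<open>(t', k) \<in> E\<close> by blast
    qed
  qed
  with \<open>s > 0\<close> show ?thesis by (rule that)
qed

theorem tracking:
  assumes "bounded D \<or> bounded_solution Es \<phi>s"
  shows "\<forall>\<epsilon>>0. \<exists>s>0. \<forall>E \<phi>. is_solution C F D G E \<phi> \<and> t_complete E \<and> tracks s E \<phi> \<longrightarrow>
           (\<forall>(t, j)\<in>Es. \<exists>(t', j')\<in>E. \<bar>t - t'\<bar> < \<epsilon> \<and> norm (\<phi>s (t, j) - \<phi> (t', j')) < \<epsilon>)"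
proof (intro allI impI)
  fix \<epsilon> :: real assume "\<epsilon> > 0"
  obtain K where K: "compact K" "K \<subseteq> D"
    and near_D: "\<And>t j v. (t, j) \<in> Es \<Longrightarrow> v \<in> D \<Longrightarrow> norm (\<phi>s (t, j) - v) < 1 \<Longrightarrow> v \<in> K"
    and near_jump: "\<And>t j v. (t, j) \<in> Es \<Longrightarrow> v \<in> D \<Longrightarrow> norm (\<phi>s (t, j) - jump v) < 1 \<Longrightarrow> v \<in> K"
    using compact_D_near_reference[OF assms] by blast
  obtain s1 where "s1 > 0" and jump_soon: "\<And>E \<phi> t j v. is_solution C F D G E \<phi> \<Longrightarrow> t_complete E \<Longrightarrow>
      (t, j) \<in> E \<Longrightarrow> v \<in> K \<Longrightarrow> norm (\<phi> (t, j) - v) < s1 \<Longrightarrow>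
      \<exists>b. t \<le> b \<and> b < t + \<epsilon> / 2 \<and> (b, Suc j) \<in> E \<and> dist (\<phi> (b, Suc j)) (jump v) < \<epsilon> / 2"
    using jump_soon_near_D[OF K, of "\<epsilon> / 2"] \<open>\<epsilon> > 0\<close> by auto
  obtain s2 where "s2 > 0" and jumped: "\<And>E \<phi> t j j' u. is_solution C F D G E \<phi> \<Longrightarrow> tracks s2 E \<phi> \<Longrightarrow>
      (t, j) \<in> Es \<Longrightarrow> (t, j') \<in> E \<Longrightarrow> u \<in> K \<Longrightarrow> norm (\<phi>s (t, j) - u) < s2 \<Longrightarrow>
      norm (\<phi> (t, j') - jump u) < s2 \<Longrightarrow>
      \<exists>t' j''. (t', j'') \<in> E \<and> \<bar>t - t'\<bar> < \<epsilon> \<and> norm (\<phi>s (t, j) - \<phi> (t', j'')) < \<epsilon>"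
    using tracking_near_jump_image[OF K \<open>\<epsilon> > 0\<close>] by blast
  define s where "s = min (min (\<epsilon> / 4) 1) (min s1 s2)"
  have s: "s > 0" "s \<le> \<epsilon> / 4" "s \<le> 1" "s \<le> s1" "s \<le> s2"
    using \<open>\<epsilon> > 0\<close> \<open>s1 > 0\<close> \<open>s2 > 0\<close> unfolding s_def by auto
  have "\<exists>t' j'. (t', j') \<in> E \<and> \<bar>t - t'\<bar> < \<epsilon> \<and> norm (\<phi>s (t, j) - \<phi> (t', j')) < \<epsilon>"
    if sol: "is_solution C F D G E \<phi>" "t_complete E" and tracks: "tracks s E \<phi>" and tj: "(t, j) \<in> Es"
    for E \<phi> t j
  proof -
    obtain j' where j': "(t, j') \<in> E" "rhoA C D G (\<phi>s (t, j)) (\<phi> (t, j')) < s"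
      using tracks tj unfolding tracks_def by blast
    obtain u v where uv: "(u, v) \<in> setA C D G" "dist (\<phi>s (t, j)) u < s" "dist (\<phi> (t, j')) v < s"
      using rhoA_lessE[OF j'(2) setA_nonempty] by blast
    from uv(1) show ?thesis
    proof (cases rule: setA_cases)
      case 1
      then have "dist (\<phi>s (t, j)) (\<phi> (t, j')) < \<epsilon>"
        using uv(2,3) s dist_triangle[of "\<phi>s (t, j)" "\<phi> (t, j')" u] by (simp add: dist_commute)
      then show ?thesis using j'(1) \<open>\<epsilon> > 0\<close> by (intro exI[of _ t] exI[of _ j']) (auto simp: dist_norm)
    next
      case 2
      then have "v \<in> K" using near_jump[OF tj] uv(2) s by (simp add: dist_norm)
      moreover have "norm (\<phi> (t, j') - v) < s1" using uv(3) s by (simp add: dist_norm)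
      ultimately obtain b where b: "t \<le> b" "b < t + \<epsilon> / 2" "(b, Suc j') \<in> E"
          "dist (\<phi> (b, Suc j')) (jump v) < \<epsilon> / 2"
        using jump_soon[OF sol j'(1)] by blast
      then have "dist (\<phi>s (t, j)) (\<phi> (b, Suc j')) < \<epsilon>"
        using uv(2) s 2 dist_triangle[of "\<phi>s (t, j)" "\<phi> (b, Suc j')" "jump v"] by (simp add: dist_commute)
      then show ?thesis using b \<open>\<epsilon> > 0\<close> by (intro exI[of _ b] exI[of _ "Suc j'"]) (auto simp: dist_norm)
    next
      case 3
      then have "u \<in> K" using near_D[OF tj] uv(2) s by (simp add: dist_norm)
      have "tracks s2 E \<phi>" using tracks s unfolding tracks_def by fastforce
      then show ?thesis
        using jumped[OF sol(1) _ tj j'(1) \<open>u \<in> K\<close>] uv(2,3) s 3 by (simp add: dist_norm norm_minus_commute)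
    qed
  qed
  then show "\<exists>s>0. \<forall>E \<phi>. is_solution C F D G E \<phi> \<and> t_complete E \<and> tracks s E \<phi> \<longrightarrow>
      (\<forall>(t, j)\<in>Es. \<exists>(t', j')\<in>E. \<bar>t - t'\<bar> < \<epsilon> \<and> norm (\<phi>s (t, j) - \<phi> (t', j')) < \<epsilon>)"
    using \<open>s > 0\<close> by blast
qed

end

theorem theorem1:
  fixes C D :: "'a::euclidean_space set"
    and F G :: "'a \<Rightarrow> 'a set"
    and Es :: "(real \<times> nat) set" and \<phi>s :: "real \<times> nat \<Rightarrow> 'a"
  assumes hbc: "hybrid_basic_conditions C F D G"
    and sol: "is_solution C F D G Es \<phi>s" and tc: "t_complete Es"
    and i: "set_image G D \<inter> D = {}" "set_image G D \<subseteq> C" "single_valued_on G D" "proper_map G"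
    and ii: "\<forall>x\<in>C \<inter> D. F x \<inter> tangent_cone C x = {}"
    and iii: "\<forall>x\<in>C \<inter> set_image G D. uminus ` F x \<inter> tangent_cone C x = {}"
    and iv: "bounded D \<or> bounded_solution Es \<phi>s"
  shows "\<forall>\<epsilon>>0. \<exists>s>0. \<forall>E \<phi>. is_solution C F D G E \<phi> \<and> t_complete E \<and>
            norm (\<phi>s (0, 0) - \<phi> (0, 0)) < s \<and>
            (\<forall>(t, j)\<in>Es. \<exists>j'. (t, j') \<in> E \<and> rhoA C D G (\<phi>s (t, j)) (\<phi> (t, j')) < s)
          \<longrightarrow> (\<forall>(t, j)\<in>Es. \<exists>(t', j')\<in>E. \<bar>t - t'\<bar> < \<epsilon> \<and> norm (\<phi>s (t, j) - \<phi> (t', j')) < \<epsilon>)"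
proof -
  interpret reference_solution C D F G Es \<phi>s
    using hbc sol i ii iii by unfold_locales auto
  show ?thesis using tracking[OF iv] unfolding tracks_def .
qed

end
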